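(* Let $s,t\ge1$ and $D\ge3$ be integers and let $\ell=2\lceil\log s/\log(D-1)\rceil+3$. Let $\mathcal G=\{G_1,\dots,G_t\}$ be an $s$-joined graph family on $n$ vertices. Let $\mathcal H$ be a $[t]$-edge-colored graph with $\Delta^{mon}(\mathcal H)\le D$ and $|V(\mathcal H)|\le n-6sD$, and let $\mathcal H_0\subseteq\mathcal H$ be a rooted $[t]$-edge-colored subgraph such that $\mathcal H$ is $\mathcal H_0$-path-constructible with all paths $P_1,\dots,P_k$ of length at least $\ell$. If $\phi:\mathcal H_0\hookrightarrow\mathcal G$ is a $(2s,D)$-good embedding, then there is a root set for $\mathcal H$ containing the roots of $\mathcal H_0$ that makes $\mathcal H$ a rooted graph, together with a $(2s,D)$-good embedding $\phi':\mathcal H\hookrightarrow\mathcal G$ extending $\phi$.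
   Context: A graph family $\mathcal G=\{G_1,\dots,G_t\}$ is a collection of $t$ simple graphs on a common finite vertex set $V$, $n=|V|$. For $X\subseteq V\times[t]$, $\Gamma_{\mathcal G}(X)=\bigcup_{(v,i)\in X}\{u\in V:uv\in E(G_i)\}$. The family is $s$-joined if for all $X\subseteq V\times[t]$ and $Y\subseteq V$ with $|X|\ge s$ and $|Y|\ge s$ there exist $(v,i)\in X$ and $y\in Y$ with $vy\in E(G_i)$. A $[t]$-edge-colored graph $\mathcal H$ is a simple graph with each edge colored in $[t]$; $H_i$ is its spanning subgraph of color-$i$ edges, $\deg_{H_i}(h)$ the number of color-$i$ edges at $h$, and $\Delta^{mon}(\mathcal H)=\max_i\max_h\deg_{H_i}(h)$. An embedding $\phi:\mathcal H\hookrightarrow\mathcal G$ is an injective map $V(\mathcal H)\to V$ with $\phi(x)\phi(y)\in E(G_i)$ for every edge $xy$ of color $i$. A rooted $[t]$-edge-colored graph is one with a distinguished set of roots such that, after deleting all edges with both ends roots, every connected component is a tree containing exactly one root; for a non-root $h$ the unique path from $h$ to the root set (meeting it only at its last vertex) determines the parent of $h$ (its neighbour on the path) and $c(h)$, the color of the edge from $h$ to its parent. For fixed $D$: $P_\phi(\mathcal H)=\{(\phi(h),c(h)):h\text{ non-root}\}$ and, for $X\subseteq V\times[t]$, $R(X,\phi)=|\Gamma_{\mathcal G}(X)\setminus\phi(V(\mathcal H))|-\sum_{(v,i)\in X}[D-\deg_{H_i}(\phi^{-1}(v))]-|P_\phi(\mathcal H)\cap X|$, with $\deg_{H_i}(\phi^{-1}(v))=0$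 if $v\notin\phi(V(\mathcal H))$. The embedding $\phi$ is $(s,D)$-good if $R(X,\phi)\ge0$ for every $X\subseteq V\times[t]$ with $|X|\le s$. For $\mathcal H_0\subseteq\mathcal H$, $\mathcal H$ is $\mathcal H_0$-path-constructible if there are edge-disjoint paths $P_1,\dots,P_k$ in $\mathcal H$ such that (i) $E(\mathcal H)=E(\mathcal H_0)\cup\bigcup_{j\in[k]}E(P_j)$; (ii) for each $i\in[k]$ the internal vertices of $P_i$ are disjoint from $V(\mathcal H_0)\cup\bigcup_{j<i}V(P_j)$; (iii) for each $i\in[k]$ at least one endpoint of $P_i$ lies in $V(\mathcal H_0)\cup\bigcup_{j<i}V(P_j)$. An embedding of $\mathcal H$ extends $\phi$ if it agrees with $\phi$ on $V(\mathcal H_0)$. *)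

theory Defs
  imports Complex_Main
begin

definition graph_family :: "'v set \<Rightarrow> nat \<Rightarrow> (nat \<Rightarrow> 'v \<Rightarrow> 'v \<Rightarrow> bool) \<Rightarrow> bool" where
  "graph_family V t G \<longleftrightarrow> finite V \<and>
     (\<forall>i\<in>{1..t}. \<forall>u w. G i u w \<longrightarrow> u \<in> V \<and> w \<in> V \<and> u \<noteq> w \<and> G i w u)"

definition Gamma :: "'v set \<Rightarrow> (nat \<Rightarrow> 'v \<Rightarrow> 'v \<Rightarrow> bool) \<Rightarrow> ('v \<times> nat) set \<Rightarrow> 'v set" where
  "Gamma V G X = {u \<in> V. \<exists>(w, i) \<in> X. G i w u}"

definition s_joined :: "'v set \<Rightarrow> nat \<Rightarrow> (nat \<Rightarrow> 'v \<Rightarrow> 'v \<Rightarrow> bool) \<Rightarrow> nat \<Rightarrow> bool" where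
  "s_joined V t G s \<longleftrightarrow>
     (\<forall>X Y. X \<subseteq> V \<times> {1..t} \<and> Y \<subseteq> V \<and> card X \<ge> s \<and> card Y \<ge> s \<longrightarrow>
        (\<exists>(w, i) \<in> X. \<exists>y \<in> Y. G i w y))"

definition colgraph :: "nat \<Rightarrow> 'h set \<Rightarrow> 'h set set \<Rightarrow> ('h set \<Rightarrow> nat) \<Rightarrow> bool" where
  "colgraph t VH EH col \<longleftrightarrow> finite VH \<and>
     (\<forall>e \<in> EH. \<exists>x y. e = {x, y} \<and> x \<noteq> y \<and> x \<in> VH \<and> y \<in> VH) \<and>
     (\<forall>e \<in> EH. col e \<in> {1..t})"

definition colsubgraph :: "'h set \<Rightarrow> 'h set set \<Rightarrow> 'h set \<Rightarrow> 'h set set \<Rightarrow> bool" where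
  "colsubgraph VH0 EH0 VH EH \<longleftrightarrow> VH0 \<subseteq> VH \<and> EH0 \<subseteq> EH"

definition degc :: "'h set set \<Rightarrow> ('h set \<Rightarrow> nat) \<Rightarrow> nat \<Rightarrow> 'h \<Rightarrow> nat" where
  "degc EH col i h = card {y. {h, y} \<in> EH \<and> col {h, y} = i}"

definition max_mon_deg_le :: "nat \<Rightarrow> 'h set \<Rightarrow> 'h set set \<Rightarrow> ('h set \<Rightarrow> nat) \<Rightarrow> nat \<Rightarrow> bool" where
  "max_mon_deg_le t VH EH col D \<longleftrightarrow> (\<forall>i \<in> {1..t}. \<forall>h \<in> VH. degc EH col i h \<le> D)"

definition is_path :: "'h set set \<Rightarrow> 'h list \<Rightarrow> bool" where
  "is_path E p \<longleftrightarrow> p \<noteq> [] \<and> distinct p \<and> (\<forall>j. Suc j < length p \<longrightarrow> {p ! j, p ! Suc j} \<in> E)"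

definition is_cycle :: "'h set set \<Rightarrow> 'h list \<Rightarrow> bool" where
  "is_cycle E c \<longleftrightarrow> length c \<ge> 3 \<and> is_path E c \<and> {last c, hd c} \<in> E"

definition reach :: "'h set set \<Rightarrow> 'h \<Rightarrow> 'h \<Rightarrow> bool" where
  "reach E x y \<longleftrightarrow> (x, y) \<in> {(a, b). {a, b} \<in> E}\<^sup>*"

definition rooted :: "'h set \<Rightarrow> 'h set set \<Rightarrow> 'h set \<Rightarrow> bool" where
  "rooted VH EH R \<longleftrightarrow> R \<subseteq> VH \<and>
     (let E' = {e \<in> EH. \<not> e \<subseteq> R} in
        (\<nexists>c. is_cycle E' c) \<and>
        (\<forall>x \<in> VH. card ({y. reach E' x y} \<inter> R) = 1))"

definition root_path :: "'h set set \<Rightarrow> 'h set \<Rightarrow> 'h \<Rightarrow> 'h list \<Rightarrow> bool" where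
  "root_path EH R h p \<longleftrightarrow> is_path EH p \<and> hd p = h \<and> last p \<in> R \<and>
     (\<forall>x \<in> set (butlast p). x \<notin> R)"

definition parent :: "'h set set \<Rightarrow> 'h set \<Rightarrow> 'h \<Rightarrow> 'h" where
  "parent EH R h = (THE p. root_path EH R h p) ! 1"

definition pcol :: "'h set set \<Rightarrow> ('h set \<Rightarrow> nat) \<Rightarrow> 'h set \<Rightarrow> 'h \<Rightarrow> nat" where
  "pcol EH col R h = col {h, parent EH R h}"

definition embedding ::
  "'v set \<Rightarrow> (nat \<Rightarrow> 'v \<Rightarrow> 'v \<Rightarrow> bool) \<Rightarrow> 'h set \<Rightarrow> 'h set set \<Rightarrow> ('h set \<Rightarrow> nat) \<Rightarrow> ('h \<Rightarrow> 'v) \<Rightarrow> bool" where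
  "embedding V G VH EH col \<phi> \<longleftrightarrow> inj_on \<phi> VH \<and> \<phi> ` VH \<subseteq> V \<and>
     (\<forall>x y. {x, y} \<in> EH \<longrightarrow> G (col {x, y}) (\<phi> x) (\<phi> y))"

definition degpre :: "'h set \<Rightarrow> 'h set set \<Rightarrow> ('h set \<Rightarrow> nat) \<Rightarrow> ('h \<Rightarrow> 'v) \<Rightarrow> 'v \<Rightarrow> nat \<Rightarrow> nat" where
  "degpre VH EH col \<phi> v i = (if v \<in> \<phi> ` VH then degc EH col i (inv_into VH \<phi> v) else 0)"

definition Pset :: "'h set \<Rightarrow> 'h set set \<Rightarrow> ('h set \<Rightarrow> nat) \<Rightarrow> 'h set \<Rightarrow> ('h \<Rightarrow> 'v) \<Rightarrow> ('v \<times> nat) set" where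
  "Pset VH EH col R \<phi> = (\<lambda>h. (\<phi> h, pcol EH col R h)) ` (VH - R)"

definition Rval ::
  "'v set \<Rightarrow> (nat \<Rightarrow> 'v \<Rightarrow> 'v \<Rightarrow> bool) \<Rightarrow> nat \<Rightarrow> 'h set \<Rightarrow> 'h set set \<Rightarrow> ('h set \<Rightarrow> nat) \<Rightarrow> 'h set
    \<Rightarrow> ('h \<Rightarrow> 'v) \<Rightarrow> ('v \<times> nat) set \<Rightarrow> int" where
  "Rval V G D VH EH col R \<phi> X =
     int (card (Gamma V G X - \<phi> ` VH))
     - (\<Sum>(v, i) \<in> X. int D - int (degpre VH EH col \<phi> v i))
     - int (card (Pset VH EH col R \<phi> \<inter> X))"

definition good ::
  "'v set \<Rightarrow> nat \<Rightarrow> (nat \<Rightarrow> 'v \<Rightarrow> 'v \<Rightarrow> bool) \<Rightarrow> nat \<Rightarrow> nat \<Rightarrow> 'h set \<Rightarrow> 'h set set \<Rightarrow> ('h set \<Rightarrow> nat)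
    \<Rightarrow> 'h set \<Rightarrow> ('h \<Rightarrow> 'v) \<Rightarrow> bool" where
  "good V t G s D VH EH col R \<phi> \<longleftrightarrow>
     (\<forall>X. X \<subseteq> V \<times> {1..t} \<and> card X \<le> s \<longrightarrow> Rval V G D VH EH col R \<phi> X \<ge> 0)"

definition path_edges :: "'h list \<Rightarrow> 'h set set" where
  "path_edges p = {{p ! j, p ! Suc j} | j. Suc j < length p}"

definition path_constructible ::
  "'h set \<Rightarrow> 'h set set \<Rightarrow> 'h set \<Rightarrow> 'h set set \<Rightarrow> 'h list list \<Rightarrow> bool" where
  "path_constructible VH0 EH0 VH EH Ps \<longleftrightarrow>
     (\<forall>p \<in> set Ps. is_path EH p) \<and>
     (\<forall>a < length Ps. \<forall>b < length Ps. a \<noteq> b \<longrightarrow> path_edges (Ps ! a) \<inter> path_edges (Ps ! b) = {}) \<and>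
     EH = EH0 \<union> \<Union> (path_edges ` set Ps) \<and>
     (\<forall>a < length Ps.
        set (butlast (tl (Ps ! a))) \<inter> (VH0 \<union> (\<Union>b<a. set (Ps ! b))) = {} \<and>
        (hd (Ps ! a) \<in> VH0 \<union> (\<Union>b<a. set (Ps ! b)) \<or>
         last (Ps ! a) \<in> VH0 \<union> (\<Union>b<a. set (Ps ! b))))"

end

theory Submission
  imports Defs
begin

text \<open>Goodness is a Hall-type condition: the surplus \<open>|\<Gamma>(X) - J| - (\<Sum>x\<in>X. \<mu> x)\<close> of every
  small set X of (vertex, colour) pairs is nonnegative, where J is the image of the embedding and
  \<open>\<mu>\<close> the budget of edges still to be embedded. The surplus is submodular, so the tight sets
  avoiding a pair (q, i) are closed under union, and s-joinedness makes each of them smaller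
  than s; a colour-i neighbour of q outside the neighbourhood of the largest one can therefore be
  used without losing goodness. Adding such neighbours one at a time embeds paths with a free
  end. A path between two embedded vertices is embedded by growing \<open>(D - 1)\<close>-ary trees of
  depth m from both ends, \<open>(D - 1)^m \<ge> s\<close>; s-joinedness provides an edge between their leaf
  sets, and discarding the unused tree vertices keeps goodness. This needs \<open>2 m + 3\<close> edges,
  whence the length bound \<open>\<ell>\<close>. Isolated vertices are placed last.\<close>

section \<open>Surplus and feasibility\<close>

lemma Gamma_subset: "Gamma V G X \<subseteq> V"
  by (auto simp: Gamma_def)

lemma Gamma_Un: "Gamma V G (X \<union> Y) = Gamma V G X \<union> Gamma V G Y"
  by (auto simp: Gamma_def)

lemma Gamma_Int: "Gamma V G (X \<inter> Y) \<subseteq> Gamma V G X \<inter> Gamma V G Y"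
  by (auto simp: Gamma_def)

lemma Gamma_mono: "X \<subseteq> Y \<Longrightarrow> Gamma V G X \<subseteq> Gamma V G Y"
  by (auto simp: Gamma_def)

lemma Gamma_empty [simp]: "Gamma V G {} = {}"
  by (auto simp: Gamma_def)

lemma Gamma_memI: "(q, i) \<in> X \<Longrightarrow> G i q v \<Longrightarrow> v \<in> V \<Longrightarrow> v \<in> Gamma V G X"
  by (auto simp: Gamma_def)

lemma card_diff_insert_if:
  assumes "finite A" "v \<notin> J"
  shows "card (A - insert v J) + (if v \<in> A then 1 else 0) = card (A - J)"
proof -
  have "A - insert v J = (A - J) - {v}" by blast
  moreover have "v \<in> A - J \<longleftrightarrow> v \<in> A" using assms(2) by blast
  moreover have "v \<in> A - J \<Longrightarrow> card (A - J) > 0" using assms(1) card_gt_0_iff by blast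
  ultimately show ?thesis by (simp only: card_Diff_singleton_if) auto
qed

locale joined_host =
  fixes V :: "'v set" and t :: nat and G :: "nat \<Rightarrow> 'v \<Rightarrow> 'v \<Rightarrow> bool" and s D n :: nat
  assumes graph_family: "graph_family V t G" and card_V: "card V = n"
    and s_joined: "s_joined V t G s" and s_pos: "s \<ge> 1" and D_ge_3: "D \<ge> 3"
begin

text \<open>J is the set of used host vertices and \<open>\<mu> (v, i)\<close> the number of colour-i edges at v that
  may still be embedded; for \<open>\<mu> = D - deg\<close> the surplus is \<open>Rval\<close> without its parent term.\<close>

definition surplus :: "'v set \<Rightarrow> ('v \<times> nat \<Rightarrow> int) \<Rightarrow> ('v \<times> nat) set \<Rightarrow> int" where
  "surplus J \<mu> X = int (card (Gamma V G X - J)) - (\<Sum>x\<in>X. \<mu> x)"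

definition feasible :: "'v set \<Rightarrow> ('v \<times> nat \<Rightarrow> int) \<Rightarrow> bool" where
  "feasible J \<mu> \<longleftrightarrow> (\<forall>X. X \<subseteq> V \<times> {1..t} \<and> card X \<le> 2 * s \<longrightarrow> 0 \<le> surplus J \<mu> X)"

definition capacity :: int where
  "capacity = int n - 2 * int s * int D - int s"

definition admissible :: "'v set \<Rightarrow> ('v \<times> nat \<Rightarrow> int) \<Rightarrow> bool" where
  "admissible J \<mu> \<longleftrightarrow> feasible J \<mu> \<and> finite J \<and> int (card J) \<le> capacity \<and> (\<forall>x. \<mu> x \<le> int D)"

definition tight_sets :: "'v \<times> nat \<Rightarrow> 'v set \<Rightarrow> ('v \<times> nat \<Rightarrow> int) \<Rightarrow> ('v \<times> nat) set set" where
  "tight_sets z J \<mu> = {X. X \<subseteq> V \<times> {1..t} \<and> card X \<le> 2 * s \<and> surplus J \<mu> X = 0 \<and> z \<notin> X}"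

lemma finite_V: "finite V"
  using graph_family unfolding graph_family_def by blast

lemma finite_Gamma: "finite (Gamma V G X)"
  using finite_subset[OF Gamma_subset finite_V] .

lemma finite_pairs: "X \<subseteq> V \<times> {1..t} \<Longrightarrow> finite X"
  using finite_V finite_subset by blast

lemma G_sym: "i \<in> {1..t} \<Longrightarrow> G i u w \<Longrightarrow> G i w u"
  using graph_family unfolding graph_family_def by blast

lemma feasibleD: "feasible J \<mu> \<Longrightarrow> X \<subseteq> V \<times> {1..t} \<Longrightarrow> card X \<le> 2 * s \<Longrightarrow> 0 \<le> surplus J \<mu> X"
  by (simp add: feasible_def)

lemma admissible_feasible: "admissible J \<mu> \<Longrightarrow> feasible J \<mu>"
  by (simp add: admissible_def)

lemma surplus_empty [simp]: "surplus J \<mu> {} = 0"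
  by (simp add: surplus_def)

lemma surplus_submodular:
  assumes "finite X" "finite Y"
  shows "surplus J \<mu> (X \<union> Y) + surplus J \<mu> (X \<inter> Y) \<le> surplus J \<mu> X + surplus J \<mu> Y"
proof -
  let ?A = "Gamma V G X - J" and ?B = "Gamma V G Y - J"
  have fin: "finite ?A" "finite ?B" using finite_Gamma by auto
  have Un: "Gamma V G (X \<union> Y) - J = ?A \<union> ?B" by (auto simp: Gamma_Un)
  have "card (Gamma V G (X \<inter> Y) - J) \<le> card (?A \<inter> ?B)"
    using Gamma_Int[of V G X Y] fin by (intro card_mono) auto
  moreover have "card (?A \<union> ?B) + card (?A \<inter> ?B) = card ?A + card ?B"
    using fin card_Un_Int by metis
  moreover have "(\<Sum>x\<in>X \<union> Y. \<mu> x) + (\<Sum>x\<in>X \<inter> Y. \<mu> x) = (\<Sum>x\<in>X. \<mu> x) + (\<Sum>x\<in>Y. \<mu> x)"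
    using assms sum.union_inter by blast
  ultimately show ?thesis unfolding surplus_def Un by linarith
qed

text \<open>By s-joinedness fewer than s vertices miss \<open>\<Gamma>(X)\<close>; the capacity bound pays for the rest.\<close>

lemma surplus_pos_if_large:
  assumes X: "X \<subseteq> V \<times> {1..t}" "s \<le> card X" "card X \<le> 2 * s"
    and \<mu>: "\<forall>x. \<mu> x \<le> int D" and J: "finite J" "int (card J) \<le> capacity"
  shows "surplus J \<mu> X > 0"
proof -
  let ?Y = "V - Gamma V G X"
  have "card ?Y < s"
  proof (rule ccontr)
    assume "\<not> card ?Y < s"
    then have "X \<subseteq> V \<times> {1..t} \<and> ?Y \<subseteq> V \<and> card X \<ge> s \<and> card ?Y \<ge> s" using X by auto
    then have "\<exists>(w, i) \<in> X. \<exists>y \<in> ?Y. G i w y"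
      using s_joined unfolding s_joined_def by blast
    then obtain w i y where "(w, i) \<in> X" "y \<in> ?Y" "G i w y" by blast
    then show False by (auto simp: Gamma_def)
  qed
  have "card V = card ?Y + card (Gamma V G X)"
    using card_Diff_subset[OF finite_Gamma Gamma_subset] card_mono[OF finite_V Gamma_subset] by simp
  moreover have "card (Gamma V G X) \<le> card (Gamma V G X - J) + card J"
    using card_Un_le[of "Gamma V G X - J" J] card_mono[of "(Gamma V G X - J) \<union> J" "Gamma V G X"]
      finite_Gamma J(1) by auto
  moreover have "(\<Sum>x\<in>X. \<mu> x) \<le> 2 * int s * int D"
  proof -
    have "(\<Sum>x\<in>X. \<mu> x) \<le> (\<Sum>x\<in>X. int D)" using \<mu> by (intro sum_mono) auto
    also have "\<dots> = int (card X) * int D" by simp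
    also have "\<dots> \<le> int (2 * s) * int D" using X(3) by (intro mult_right_mono) auto
    finally show ?thesis by simp
  qed
  ultimately show ?thesis using J(2) card_V \<open>card ?Y < s\<close> unfolding surplus_def capacity_def by linarith
qed

lemma feasible_mono:
  assumes "feasible J \<mu>" "\<And>x. \<mu>' x \<le> \<mu> x"
  shows "feasible J \<mu>'"
  unfolding feasible_def
proof (intro allI impI)
  fix X assume "X \<subseteq> V \<times> {1..t} \<and> card X \<le> 2 * s"
  then have "0 \<le> surplus J \<mu> X" using feasibleD[OF assms(1)] by simp
  moreover have "(\<Sum>x\<in>X. \<mu>' x) \<le> (\<Sum>x\<in>X. \<mu> x)" using assms(2) by (intro sum_mono)
  ultimately show "0 \<le> surplus J \<mu>' X" unfolding surplus_def by linarith
qed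

lemma feasible_cong:
  assumes "\<And>x. x \<in> V \<times> {1..t} \<Longrightarrow> \<mu>' x = \<mu> x"
  shows "feasible J \<mu>' \<longleftrightarrow> feasible J \<mu>"
proof -
  have "X \<subseteq> V \<times> {1..t} \<Longrightarrow> surplus J \<mu>' X = surplus J \<mu> X" for X
    using assms unfolding surplus_def by (simp add: subset_eq)
  then show ?thesis unfolding feasible_def by auto
qed

lemma tight_set_small:
  assumes "admissible J \<mu>" "X \<subseteq> V \<times> {1..t}" "card X \<le> 2 * s" "surplus J \<mu> X = 0"
  shows "card X < s"
  using surplus_pos_if_large[of X \<mu> J] assms unfolding admissible_def by fastforce

lemma tight_sets_Un:
  assumes ok: "admissible J \<mu>" and "X \<in> tight_sets z J \<mu>" "Y \<in> tight_sets z J \<mu>"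
  shows "X \<union> Y \<in> tight_sets z J \<mu>"
proof -
  have X: "X \<subseteq> V \<times> {1..t}" "card X \<le> 2 * s" "surplus J \<mu> X = 0" "z \<notin> X"
    and Y: "Y \<subseteq> V \<times> {1..t}" "card Y \<le> 2 * s" "surplus J \<mu> Y = 0" "z \<notin> Y"
    using assms(2,3) by (auto simp: tight_sets_def)
  have small: "card X < s" "card Y < s"
    using tight_set_small[OF ok X(1-3)] tight_set_small[OF ok Y(1-3)] by auto
  have fin: "finite X" "finite Y" using finite_pairs X(1) Y(1) by auto
  have card_Un: "card (X \<union> Y) \<le> 2 * s" using card_Un_le[of X Y] small by linarith
  have "card (X \<inter> Y) \<le> 2 * s" using card_mono[OF fin(1), of "X \<inter> Y"] small by auto
  then have "0 \<le> surplus J \<mu> (X \<union> Y)" "0 \<le> surplus J \<mu> (X \<inter> Y)"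
    using feasibleD[OF admissible_feasible[OF ok], of "X \<union> Y"]
      feasibleD[OF admissible_feasible[OF ok], of "X \<inter> Y"] card_Un X(1) Y(1) by auto
  then have "surplus J \<mu> (X \<union> Y) = 0"
    using surplus_submodular[OF fin, of J \<mu>] X(3) Y(3) by linarith
  then show ?thesis using X Y card_Un unfolding tight_sets_def by simp
qed

text \<open>By submodularity the tight sets avoiding z form a lattice; its top element is the
  obstruction that a newly used vertex has to avoid.\<close>

lemma Union_tight_sets:
  assumes ok: "admissible J \<mu>"
  shows "\<Union> (tight_sets z J \<mu>) \<in> tight_sets z J \<mu>"
proof -
  have "finite (tight_sets z J \<mu>)"
    by (rule finite_subset[of _ "Pow (V \<times> {1..t})"]) (auto simp: tight_sets_def finite_V)
  moreover have "finite F \<Longrightarrow> F \<subseteq> tight_sets z J \<mu> \<Longrightarrow> \<Union> F \<in> tight_sets z J \<mu>" for F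
  proof (induction F rule: finite_induct)
    case (insert X F)
    then show ?case using tight_sets_Un[OF ok, of X z "\<Union> F"] by simp
  qed (simp add: tight_sets_def)
  ultimately show ?thesis by blast
qed

lemma feasible_insert_outside_tight:
  assumes ok: "admissible J \<mu>" and v: "v \<notin> J" "v \<notin> Gamma V G (\<Union> (tight_sets z J \<mu>))"
    and z: "z \<in> V \<times> {1..t} \<Longrightarrow> v \<in> Gamma V G {z}"
  shows "feasible (insert v J) (\<lambda>x. \<mu> x - (if x = z then 1 else 0))"
  unfolding feasible_def
proof (intro allI impI)
  fix X assume X: "X \<subseteq> V \<times> {1..t} \<and> card X \<le> 2 * s"
  have p0: "0 \<le> surplus J \<mu> X" using feasibleD[OF admissible_feasible[OF ok]] X by simp
  have sum: "(\<Sum>x\<in>X. \<mu> x - (if x = z then 1 else 0)) = (\<Sum>x\<in>X. \<mu> x) - (if z \<in> X then 1 else 0)"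
    using finite_pairs X by (simp add: sum_subtractf)
  have card: "card (Gamma V G X - insert v J) + (if v \<in> Gamma V G X then 1 else 0) = card (Gamma V G X - J)"
    using card_diff_insert_if[OF finite_Gamma v(1)] .
  consider "z \<in> X" | "z \<notin> X" "surplus J \<mu> X = 0" | "surplus J \<mu> X \<noteq> 0" by blast
  then show "0 \<le> surplus (insert v J) (\<lambda>x. \<mu> x - (if x = z then 1 else 0)) X"
  proof cases
    case 1
    then have "v \<in> Gamma V G X" using z X Gamma_mono[of "{z}" X] by blast
    then show ?thesis using card sum p0 1 unfolding surplus_def by simp
  next
    case 2
    then have "X \<in> tight_sets z J \<mu>" using X unfolding tight_sets_def by simp
    then have "v \<notin> Gamma V G X" using v(2) Gamma_mono[of X] by blast
    then show ?thesis using card sum p0 2 unfolding surplus_def by simp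
  next
    case 3
    then show ?thesis using card sum p0 unfolding surplus_def by (simp split: if_splits)
  qed
qed

lemma feasible_add_neighbour:
  assumes ok: "admissible J \<mu>" and q: "q \<in> V" "i \<in> {1..t}" and slack: "\<mu> (q, i) \<ge> 1"
  shows "\<exists>v. v \<in> V \<and> v \<notin> J \<and> G i q v \<and> feasible (insert v J) (\<lambda>x. \<mu> x - (if x = (q, i) then 1 else 0))"
proof -
  define T where "T = \<Union> (tight_sets (q, i) J \<mu>)"
  have T: "T \<subseteq> V \<times> {1..t}" "card T \<le> 2 * s" "surplus J \<mu> T = 0" "(q, i) \<notin> T"
    using Union_tight_sets[OF ok] unfolding T_def tight_sets_def by simp_all
  have fin: "finite T" using finite_pairs T(1) .
  have "card (insert (q, i) T) \<le> 2 * s"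
    using tight_set_small[OF ok T(1-3)] card_insert_le_m1 fin by (simp add: card_insert_if)
  then have "0 \<le> surplus J \<mu> (insert (q, i) T)"
    using feasibleD[OF admissible_feasible[OF ok]] q T(1) by simp
  define S where "S = Gamma V G {(q, i)} - J - Gamma V G T"
  have "Gamma V G (insert (q, i) T) - J = (Gamma V G T - J) \<union> S"
    using Gamma_Un[of V G "{(q, i)}" T] by (auto simp: S_def)
  moreover have "card ((Gamma V G T - J) \<union> S) = card (Gamma V G T - J) + card S"
    using finite_Gamma by (intro card_Un_disjoint) (auto simp: S_def)
  moreover have "(\<Sum>x\<in>insert (q, i) T. \<mu> x) = \<mu> (q, i) + (\<Sum>x\<in>T. \<mu> x)"
    using fin T(4) by simp
  ultimately have "\<mu> (q, i) \<le> int (card S)"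
    using \<open>0 \<le> surplus J \<mu> (insert (q, i) T)\<close> T(3) unfolding surplus_def by simp
  then obtain v where "v \<in> S" using slack by fastforce
  then have v: "v \<in> V" "G i q v" "v \<notin> J" "v \<notin> Gamma V G T" by (auto simp: S_def Gamma_def)
  have "v \<in> Gamma V G {(q, i)}" using v(1,2) by (auto simp: Gamma_def)
  then have "feasible (insert v J) (\<lambda>x. \<mu> x - (if x = (q, i) then 1 else 0))"
    using feasible_insert_outside_tight[OF ok v(3)] v(4) unfolding T_def by blast
  then show ?thesis using v by blast
qed

lemma feasible_add_vertex:
  assumes ok: "admissible J \<mu>" and room: "int (card J) + int s * int D < int n"
  shows "\<exists>v. v \<in> V \<and> v \<notin> J \<and> feasible (insert v J) \<mu>"
proof -
  obtain q where q: "(q, 0::nat) \<notin> V \<times> {1..t}" by auto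
  define T where "T = \<Union> (tight_sets (q, 0) J \<mu>)"
  have T: "T \<subseteq> V \<times> {1..t}" "card T \<le> 2 * s" "surplus J \<mu> T = 0"
    using Union_tight_sets[OF ok] unfolding T_def tight_sets_def by simp_all
  have "(\<Sum>x\<in>T. \<mu> x) \<le> (\<Sum>x\<in>T. int D)"
    using ok unfolding admissible_def by (intro sum_mono) auto
  also have "\<dots> = int (card T) * int D" by simp
  also have "\<dots> \<le> int s * int D"
    using tight_set_small[OF ok T] by (intro mult_right_mono) auto
  finally have "int (card (Gamma V G T - J)) \<le> int s * int D"
    using T(3) unfolding surplus_def by linarith
  moreover have "card V \<le> card (V - J) + card J"
    using card_Un_le[of "V - J" J] card_mono[of "(V - J) \<union> J" V] finite_V ok
    unfolding admissible_def by auto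
  ultimately have less: "card (Gamma V G T - J) < card (V - J)" using room card_V by linarith
  have "\<not> V - J \<subseteq> Gamma V G T - J"
  proof
    assume "V - J \<subseteq> Gamma V G T - J"
    then have "card (V - J) \<le> card (Gamma V G T - J)" using finite_Gamma by (intro card_mono) auto
    then show False using less by simp
  qed
  then obtain v where v: "v \<in> V" "v \<notin> J" "v \<notin> Gamma V G T" by blast
  have "feasible (insert v J) (\<lambda>x. \<mu> x - (if x = (q, 0) then 1 else 0))"
    using feasible_insert_outside_tight[OF ok v(2)] v(3) q unfolding T_def by blast
  moreover have "feasible (insert v J) (\<lambda>x. \<mu> x - (if x = (q, 0) then 1 else 0)) \<longleftrightarrow> feasible (insert v J) \<mu>"
    using q by (intro feasible_cong) auto
  ultimately show ?thesis using v by blast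
qed

end

section \<open>Trees grown from a used vertex\<close>

lemma count_list_concat_replicate:
  "distinct xs \<Longrightarrow> count_list (concat (map (replicate k) xs)) y = (if y \<in> set xs then k else 0)"
proof (induction xs)
  case (Cons x xs)
  have "count_list (replicate k x) y = (if x = y then k else 0)" by (induction k) auto
  then show ?case using Cons by auto
qed simp

lemma int_card_Un_le: "int (card (A \<union> B)) \<le> int (card A) + int (card B)"
  using card_Un_le[of A B] by (simp flip: of_nat_add)

definition tree_branch :: "'v \<Rightarrow> ('v \<Rightarrow> 'v \<times> nat) \<Rightarrow> (nat \<Rightarrow> nat) \<Rightarrow> 'v list \<Rightarrow> bool" where
  "tree_branch a pc cf xs \<longleftrightarrow> distinct xs \<and> (\<forall>l<length xs. pc (xs ! l) = ((a # xs) ! l, cf l))"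

lemma tree_branch_snoc:
  "tree_branch a pc cf (xs @ [y]) \<longleftrightarrow>
     tree_branch a pc cf xs \<and> y \<notin> set xs \<and> pc y = (last (a # xs), cf (length xs))"
proof -
  have prefix: "(a # xs @ [y]) ! l = (a # xs) ! l" if "l < Suc (length xs)" for l
    using that nth_append[of "a # xs" "[y]" l] by simp
  have "last (a # xs) = (a # xs) ! length xs" by (simp add: last_conv_nth)
  then show ?thesis unfolding tree_branch_def
    by (auto simp: nth_append prefix less_Suc_eq simp del: nth_Cons_Suc)
qed

context joined_host
begin

definition valid_state :: "'v set \<Rightarrow> ('v \<times> nat \<Rightarrow> int) \<Rightarrow> bool" where
  "valid_state J \<mu> \<longleftrightarrow> feasible J \<mu> \<and> finite J \<and> J \<subseteq> V \<and>
     (\<forall>x. \<mu> x \<le> int D) \<and> (\<forall>v i. v \<notin> J \<longrightarrow> \<mu> (v, i) = int D)"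

lemma valid_stateD:
  assumes "valid_state J \<mu>"
  shows "feasible J \<mu>" "finite J" "J \<subseteq> V" "\<mu> x \<le> int D" "v \<notin> J \<Longrightarrow> \<mu> (v, i) = int D"
  using assms unfolding valid_state_def by blast+

text \<open>In a tree grown below a used vertex, \<open>pc w\<close> is the pair (parent, colour) of the edge
  by which w hangs; the budget of each such pair is charged once per child.\<close>

definition nchildren :: "'v set \<Rightarrow> ('v \<Rightarrow> 'v \<times> nat) \<Rightarrow> 'v \<times> nat \<Rightarrow> int" where
  "nchildren W pc x = int (card {w \<in> W. pc w = x})"

definition tree_from :: "'v set \<Rightarrow> ('v \<times> nat \<Rightarrow> int) \<Rightarrow> 'v \<Rightarrow> 'v set \<Rightarrow> ('v \<Rightarrow> 'v \<times> nat) \<Rightarrow> bool" where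
  "tree_from J \<mu> a W pc \<longleftrightarrow> finite W \<and> W \<subseteq> V \<and> W \<inter> J = {} \<and>
     feasible (J \<union> W) (\<lambda>x. \<mu> x - nchildren W pc x) \<and>
     (\<forall>w\<in>W. G (snd (pc w)) (fst (pc w)) w \<and> fst (pc w) \<in> insert a W \<and> snd (pc w) \<in> {1..t})"

lemma nchildren_nonneg: "nchildren W pc x \<ge> 0"
  by (simp add: nchildren_def)

lemma nchildren_empty [simp]: "nchildren {} pc x = 0"
  by (simp add: nchildren_def)

lemma nchildren_eq_0: "\<forall>w\<in>W. fst (pc w) \<noteq> v \<Longrightarrow> nchildren W pc (v, i) = 0"
  unfolding nchildren_def by (metis (mono_tags, lifting) Collect_empty_eq card.empty fst_conv of_nat_0)

lemma nchildren_insert: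
  assumes "y \<notin> W" "finite W"
  shows "nchildren (insert y W) (pc(y := p)) z = nchildren W pc z + (if z = p then 1 else 0)"
proof -
  have "{w \<in> insert y W. (pc(y := p)) w = z} =
      (if p = z then insert y {w \<in> W. pc w = z} else {w \<in> W. pc w = z})"
    using assms(1) by auto
  then show ?thesis unfolding nchildren_def using assms by auto
qed

lemma sum_nchildren:
  assumes "finite X" "finite W"
  shows "(\<Sum>x\<in>X. nchildren W pc x) = int (card {w \<in> W. pc w \<in> X})"
proof -
  have "{w \<in> W. pc w \<in> X} = (\<Union>x\<in>X. {w \<in> W. pc w = x})" by blast
  moreover have "card (\<Union>x\<in>X. {w \<in> W. pc w = x}) = (\<Sum>x\<in>X. card {w \<in> W. pc w = x})"
    using assms by (intro card_UN_disjoint) auto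
  ultimately show ?thesis unfolding nchildren_def by simp
qed

text \<open>Removing vertices of a tree keeps feasibility: each removed vertex w that is charged
  to some pair in X lies in \<open>\<Gamma>(X)\<close>, so it gives back to the neighbourhood what it gives back
  to the budget.\<close>

lemma feasible_prune:
  assumes feas: "feasible (J \<union> W) (\<lambda>x. \<mu> x - nchildren W pc x)" and sub: "W' \<subseteq> W"
    and fin: "finite W" and disj: "J \<inter> W = {}"
    and edges: "\<forall>w\<in>W. G (snd (pc w)) (fst (pc w)) w \<and> w \<in> V"
  shows "feasible (J \<union> W') (\<lambda>x. \<mu> x - nchildren W' pc x)"
  unfolding feasible_def
proof (intro allI impI)
  fix X assume X: "X \<subseteq> V \<times> {1..t} \<and> card X \<le> 2 * s"
  have finX: "finite X" using finite_pairs X by simp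
  have fin': "finite W'" using fin sub finite_subset by blast
  define A where "A = {w \<in> W'. pc w \<in> X}"
  define B where "B = {w \<in> W - W'. pc w \<in> X}"
  define C where "C = Gamma V G X - (J \<union> W)"
  have "card {w \<in> W. pc w \<in> X} = card A + card B"
  proof -
    have "{w \<in> W. pc w \<in> X} = A \<union> B" using sub by (auto simp: A_def B_def)
    moreover have "card (A \<union> B) = card A + card B"
      using fin fin' by (intro card_Un_disjoint) (auto simp: A_def B_def)
    ultimately show ?thesis by simp
  qed
  moreover have "card C + card B \<le> card (Gamma V G X - (J \<union> W'))"
  proof -
    have "B \<subseteq> Gamma V G X"
    proof
      fix w assume "w \<in> B"
      then have "w \<in> W" "(fst (pc w), snd (pc w)) \<in> X" by (auto simp: B_def)
      then show "w \<in> Gamma V G X"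
        using Gamma_memI[where q = "fst (pc w)" and i = "snd (pc w)"] edges by blast
    qed
    then have "C \<union> B \<subseteq> Gamma V G X - (J \<union> W')" using disj sub by (auto simp: C_def B_def)
    moreover have "card (C \<union> B) = card C + card B"
      using finite_Gamma fin by (intro card_Un_disjoint) (auto simp: C_def B_def)
    ultimately show ?thesis using finite_Gamma by (metis card_mono finite_Diff)
  qed
  moreover have "0 \<le> surplus (J \<union> W) (\<lambda>x. \<mu> x - nchildren W pc x) X" using feasibleD[OF feas] X by simp
  moreover have "(\<Sum>x\<in>X. \<mu> x - nchildren W pc x) = (\<Sum>x\<in>X. \<mu> x) - int (card {w \<in> W. pc w \<in> X})"
    "(\<Sum>x\<in>X. \<mu> x - nchildren W' pc x) = (\<Sum>x\<in>X. \<mu> x) - int (card A)"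
    using sum_nchildren[OF finX fin] sum_nchildren[OF finX fin'] by (simp_all add: sum_subtractf A_def)
  ultimately show "0 \<le> surplus (J \<union> W') (\<lambda>x. \<mu> x - nchildren W' pc x) X"
    unfolding surplus_def C_def by linarith
qed

lemma tree_from_subset_V: "tree_from J \<mu> a W pc \<Longrightarrow> W \<subseteq> V"
  by (simp add: tree_from_def)

lemma tree_from_empty: "feasible J \<mu> \<Longrightarrow> tree_from J \<mu> a {} pc"
  by (simp add: tree_from_def)

lemma tree_from_add_leaf:
  assumes tree: "tree_from J \<mu> a W pc" and finJ: "finite J" and \<mu>: "\<forall>x. \<mu> x \<le> int D"
    and x: "x \<in> insert a W" "x \<in> V" and c: "c \<in> {1..t}"
    and slack: "\<mu> (x, c) - nchildren W pc (x, c) \<ge> 1"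
    and room: "int (card J) + int (card W) \<le> capacity"
  shows "\<exists>y. y \<in> V \<and> y \<notin> J \<and> y \<notin> W \<and> G c x y \<and> tree_from J \<mu> a (insert y W) (pc(y := (x, c)))"
proof -
  have T: "finite W" "W \<subseteq> V" "W \<inter> J = {}" "feasible (J \<union> W) (\<lambda>x. \<mu> x - nchildren W pc x)"
     "\<forall>w\<in>W. G (snd (pc w)) (fst (pc w)) w \<and> fst (pc w) \<in> insert a W \<and> snd (pc w) \<in> {1..t}"
    using tree unfolding tree_from_def by simp_all
  have "int (card (J \<union> W)) \<le> capacity" using int_card_Un_le room by (rule order_trans)
  moreover have "\<mu> x - nchildren W pc x \<le> int D" for x
    using spec[OF \<mu>, of x] nchildren_nonneg[of W pc x] by linarith
  ultimately have "admissible (J \<union> W) (\<lambda>x. \<mu> x - nchildren W pc x)"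
    unfolding admissible_def using T(1,4) finJ by simp
  then obtain y where y: "y \<in> V" "y \<notin> J \<union> W" "G c x y"
    "feasible (insert y (J \<union> W)) (\<lambda>z. \<mu> z - nchildren W pc z - (if z = (x, c) then 1 else 0))"
    using feasible_add_neighbour[OF _ x(2) c] slack by blast
  have "(\<lambda>z. \<mu> z - nchildren (insert y W) (pc(y := (x, c))) z) =
      (\<lambda>z. \<mu> z - nchildren W pc z - (if z = (x, c) then 1 else 0))"
    using nchildren_insert[OF _ T(1)] y(2) by (auto simp: algebra_simps)
  then have "tree_from J \<mu> a (insert y W) (pc(y := (x, c)))"
    using T y x(1) c unfolding tree_from_def by auto
  then show ?thesis using y by blast
qed

lemma tree_from_add_leaves:
  assumes "tree_from J \<mu> a W pc" "finite J" "\<forall>x. \<mu> x \<le> int D" "a \<in> V" "c \<in> {1..t}"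
    "set ps \<subseteq> insert a W"
    "\<forall>x\<in>set ps. int (count_list ps x) \<le> \<mu> (x, c) - nchildren W pc (x, c)"
    "int (card J) + int (card W) + int (length ps) \<le> capacity + 1"
  shows "\<exists>ys pc'. length ys = length ps \<and> distinct ys \<and> set ys \<inter> (J \<union> W) = {} \<and>
           tree_from J \<mu> a (W \<union> set ys) pc' \<and> (\<forall>w\<in>W. pc' w = pc w) \<and>
           (\<forall>j<length ps. pc' (ys ! j) = (ps ! j, c))"
  using assms
proof (induction ps arbitrary: W pc)
  case Nil
  then show ?case by (intro exI[of _ "[]"] exI[of _ pc]) simp
next
  case (Cons p ps)
  have finW: "finite W" using Cons.prems(1) by (simp add: tree_from_def)
  have p: "p \<in> insert a W" "p \<in> V"
    using Cons.prems(4,6) tree_from_subset_V[OF Cons.prems(1)] by auto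
  obtain y where y: "y \<notin> J" "y \<notin> W" "tree_from J \<mu> a (insert y W) (pc(y := (p, c)))"
    using tree_from_add_leaf[OF Cons.prems(1-3) p Cons.prems(5)] Cons.prems(7,8) by force
  let ?W = "insert y W" and ?pc = "pc(y := (p, c))"
  have "\<forall>x\<in>set ps. int (count_list ps x) \<le> \<mu> (x, c) - nchildren ?W ?pc (x, c)"
    using Cons.prems(7) nchildren_insert[OF y(2) finW] by auto
  moreover have "set ps \<subseteq> insert a ?W" "int (card J) + int (card ?W) + int (length ps) \<le> capacity + 1"
    using Cons.prems(6,8) y(2) finW by auto
  ultimately obtain ys pc' where ys: "length ys = length ps" "distinct ys" "set ys \<inter> (J \<union> ?W) = {}"
      "tree_from J \<mu> a (?W \<union> set ys) pc'" "\<forall>w\<in>?W. pc' w = ?pc w" "\<forall>j<length ps. pc' (ys ! j) = (ps ! j, c)"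
    using Cons.IH[OF y(3) Cons.prems(2-5)] by blast
  show ?case
  proof (intro exI[of _ "y # ys"] exI[of _ pc'] conjI allI impI)
    show "tree_from J \<mu> a (W \<union> set (y # ys)) pc'" using ys(4) by (simp add: insert_commute)
    fix j assume "j < length (p # ps)"
    then show "pc' ((y # ys) ! j) = ((p # ps) ! j, c)" using ys(5,6) by (cases j) auto
  qed (use ys y in auto)
qed

definition branching :: nat where
  "branching = D - 1"

definition tree_size :: "nat \<Rightarrow> nat" where
  "tree_size m = (\<Sum>l\<le>m. branching ^ l)"

lemma branching_ge_2: "branching \<ge> 2"
  using D_ge_3 by (simp add: branching_def)

lemma tree_size_bound: "tree_size m + 1 \<le> 2 * branching ^ m"
proof (induction m)
  case (Suc m)
  have "tree_size (Suc m) + 1 = tree_size m + 1 + branching ^ Suc m" by (simp add: tree_size_def)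
  also have "\<dots> \<le> 2 * branching ^ m + branching ^ Suc m" using Suc by simp
  also have "2 * branching ^ m \<le> branching ^ Suc m" using branching_ge_2 by simp
  finally show ?case by simp
qed (simp add: tree_size_def)

text \<open>A complete tree of depth m below a: level l is joined to level l + 1 by edges of colour
  \<open>cf l\<close>, and L is the set of its \<open>(D - 1)^m\<close> leaves, whose budgets are untouched.\<close>

definition complete_tree ::
  "'v set \<Rightarrow> ('v \<times> nat \<Rightarrow> int) \<Rightarrow> 'v \<Rightarrow> (nat \<Rightarrow> nat) \<Rightarrow> nat \<Rightarrow> 'v set \<Rightarrow> ('v \<Rightarrow> 'v \<times> nat) \<Rightarrow> 'v set \<Rightarrow> bool"
where
  "complete_tree J \<mu> a cf m W pc L \<longleftrightarrow> tree_from J \<mu> a W pc \<and> card W = tree_size m \<and> L \<subseteq> W \<and>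
     card L = branching ^ m \<and> (\<forall>x\<in>L. \<forall>i. nchildren W pc (x, i) = 0) \<and>
     (\<forall>x\<in>L. \<exists>xs. length xs = Suc m \<and> last xs = x \<and> set xs \<subseteq> W \<and> tree_branch a pc cf xs)"

lemma complete_tree_0:
  assumes st: "valid_state J \<mu>" and a: "a \<in> J" and c: "cf 0 \<in> {1..t}" and slack: "\<mu> (a, cf 0) \<ge> 1"
    and room: "int (card J) + 1 \<le> capacity + 1"
  shows "\<exists>W pc L. complete_tree J \<mu> a cf 0 W pc L"
proof -
  note J = valid_stateD[OF st]
  have "\<forall>x. \<mu> x \<le> int D" using J(4) by blast
  obtain ys pc where ys: "length ys = 1" "set ys \<inter> J = {}" "tree_from J \<mu> a (set ys) pc"
      "pc (ys ! 0) = (a, cf 0)"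
    using tree_from_add_leaves[OF tree_from_empty[OF J(1)] J(2) \<open>\<forall>x. \<mu> x \<le> int D\<close> _ c, where ps = "[a]"]
      a J(3) slack room
    by fastforce
  then obtain y where y: "ys = [y]" by (cases ys) auto
  have "y \<noteq> a" using ys(2) y a by auto
  then have "complete_tree J \<mu> a cf 0 {y} pc {y}"
    using ys y unfolding complete_tree_def tree_size_def
    by (auto simp: nchildren_def tree_branch_def intro!: exI[of _ "[y]"])
  then show ?thesis by blast
qed

text \<open>Each leaf of a complete tree still has its full budget D, so it can receive
  \<open>branching = D - 1\<close> children and keep one unit of budget for the edge to its parent.\<close>

lemma tree_from_add_level:
  assumes tree: "tree_from J \<mu> a W pc" and st: "valid_state J \<mu>" and a: "a \<in> J"
    and L: "L \<subseteq> W" "card L = branching ^ m" "\<forall>x\<in>L. \<forall>i. nchildren W pc (x, i) = 0"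
    and c: "c \<in> {1..t}" and room: "int (card J) + int (card W) + int (branching ^ Suc m) \<le> capacity + 1"
  shows "\<exists>ys pc'. length ys = branching ^ Suc m \<and> distinct ys \<and> set ys \<inter> (J \<union> W) = {} \<and>
    tree_from J \<mu> a (W \<union> set ys) pc' \<and> (\<forall>w\<in>W. pc' w = pc w) \<and> (\<forall>y\<in>set ys. \<exists>x\<in>L. pc' y = (x, c))"
proof -
  note J = valid_stateD[OF st]
  have \<mu>: "\<forall>x. \<mu> x \<le> int D" using J(4) by blast
  have W: "finite W" "W \<inter> J = {}" using tree by (auto simp: tree_from_def)
  obtain leaves where leaves: "set leaves = L" "distinct leaves"
    using finite_distinct_list[OF finite_subset[OF L(1) W(1)]] by blast
  define ps where "ps = concat (map (replicate branching) leaves)"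
  have "length leaves = branching ^ m" using L(2) leaves distinct_card by metis
  then have len_ps: "length ps = branching ^ Suc m"
    by (simp add: ps_def length_concat o_def sum_list_triv)
  have set_ps: "set ps \<subseteq> L" using leaves(1) by (auto simp: ps_def)
  have budget: "\<forall>x\<in>set ps. int (count_list ps x) \<le> \<mu> (x, c) - nchildren W pc (x, c)"
  proof
    fix x assume "x \<in> set ps"
    then have "x \<in> L" "x \<notin> J" using set_ps L(1) W(2) by auto
    then show "int (count_list ps x) \<le> \<mu> (x, c) - nchildren W pc (x, c)"
      using J(5) L(3) count_list_concat_replicate[OF leaves(2)] leaves(1)
      by (simp add: ps_def branching_def)
  qed
  have "a \<in> V" "set ps \<subseteq> insert a W" using a J(3) set_ps L(1) by auto
  then obtain ys pc' where ys: "length ys = length ps" "distinct ys" "set ys \<inter> (J \<union> W) = {}"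
      "tree_from J \<mu> a (W \<union> set ys) pc'" "\<forall>w\<in>W. pc' w = pc w" "\<forall>j<length ps. pc' (ys ! j) = (ps ! j, c)"
    using tree_from_add_leaves[OF tree J(2) \<mu> _ c _ budget] room len_ps by auto
  have "\<forall>y\<in>set ys. \<exists>x\<in>L. pc' y = (x, c)"
    using ys(1,6) set_ps by (metis in_set_conv_nth nth_mem subsetD)
  then show ?thesis using ys len_ps by metis
qed

lemma complete_tree_Suc:
  assumes tree: "complete_tree J \<mu> a cf m W pc L" and st: "valid_state J \<mu>" and a: "a \<in> J"
    and c: "cf (Suc m) \<in> {1..t}" and room: "int (card J) + int (tree_size (Suc m)) \<le> capacity + 1"
  shows "\<exists>W' pc' L'. complete_tree J \<mu> a cf (Suc m) W' pc' L'"
proof -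
  have T: "tree_from J \<mu> a W pc" "card W = tree_size m" "L \<subseteq> W" "card L = branching ^ m"
      "\<forall>x\<in>L. \<forall>i. nchildren W pc (x, i) = 0"
      "\<forall>x\<in>L. \<exists>xs. length xs = Suc m \<and> last xs = x \<and> set xs \<subseteq> W \<and> tree_branch a pc cf xs"
    using tree unfolding complete_tree_def by simp_all
  have W: "finite W" "\<forall>w\<in>W. fst (pc w) \<in> insert a W" using T(1) by (auto simp: tree_from_def)
  have tree_size: "tree_size (Suc m) = tree_size m + branching ^ Suc m" by (simp add: tree_size_def)
  obtain ys pc' where ys: "length ys = branching ^ Suc m" "distinct ys" "set ys \<inter> (J \<union> W) = {}"
      "tree_from J \<mu> a (W \<union> set ys) pc'" "\<forall>w\<in>W. pc' w = pc w" "\<forall>y\<in>set ys. \<exists>x\<in>L. pc' y = (x, cf (Suc m))"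
    using tree_from_add_level[OF T(1) st a T(3-5) c] room T(2) tree_size by auto
  have "card (W \<union> set ys) = tree_size (Suc m)"
  proof -
    have "card (W \<union> set ys) = card W + card (set ys)"
      using W(1) ys(3) by (intro card_Un_disjoint) auto
    then show ?thesis using ys(1,2) T(2) tree_size by (simp add: distinct_card)
  qed
  moreover have "card (set ys) = branching ^ Suc m" using ys(1,2) distinct_card by metis
  moreover have "nchildren (W \<union> set ys) pc' (x, i) = 0" if x: "x \<in> set ys" for x i
  proof (rule nchildren_eq_0)
    have "x \<notin> insert a W" using x ys(3) a by auto
    then show "\<forall>w\<in>W \<union> set ys. fst (pc' w) \<noteq> x"
      using W(2) ys(5,6) T(3) by fastforce
  qed
  moreover have "\<exists>xs. length xs = Suc (Suc m) \<and> last xs = y \<and> set xs \<subseteq> W \<union> set ys \<and> tree_branch a pc' cf xs"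
    if y: "y \<in> set ys" for y
  proof -
    obtain x where x: "x \<in> L" "pc' y = (x, cf (Suc m))" using ys(6) y by blast
    obtain xs where xs: "length xs = Suc m" "last xs = x" "set xs \<subseteq> W" "tree_branch a pc cf xs"
      using T(6) x(1) by blast
    have "tree_branch a pc' cf xs"
      using xs(3,4) ys(5) unfolding tree_branch_def by (metis nth_mem subsetD)
    moreover have "y \<notin> set xs" "last (a # xs) = x" using y ys(3) xs(1-3) by auto
    ultimately have "tree_branch a pc' cf (xs @ [y])" using x(2) xs(1) by (simp add: tree_branch_snoc)
    then show ?thesis using xs(1,3) y by (intro exI[of _ "xs @ [y]"]) auto
  qed
  ultimately have "complete_tree J \<mu> a cf (Suc m) (W \<union> set ys) pc' (set ys)"
    using ys(4) unfolding complete_tree_def by blast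
  then show ?thesis by blast
qed

lemma complete_tree_exists:
  assumes st: "valid_state J \<mu>" and a: "a \<in> J" and slack: "\<mu> (a, cf 0) \<ge> 1"
    and c: "\<forall>l\<le>m. cf l \<in> {1..t}" and room: "int (card J) + int (tree_size m) \<le> capacity + 1"
  shows "\<exists>W pc L. complete_tree J \<mu> a cf m W pc L"
  using c room
proof (induction m)
  case 0
  then show ?case using complete_tree_0[OF st a] slack by (simp add: tree_size_def)
next
  case (Suc m)
  have "tree_size m \<le> tree_size (Suc m)" by (simp add: tree_size_def)
  then obtain W pc L where "complete_tree J \<mu> a cf m W pc L" using Suc by fastforce
  then show ?case using complete_tree_Suc[OF _ st a] Suc.prems by simp
qed

end

section \<open>Coloured walks\<close>

text \<open>\<open>walk_incidences zs cs (v, c)\<close> counts the ends at v of colour-c edges of the walk zs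
  whose edges are coloured by cs: the budget that embedding the walk consumes.\<close>

fun walk_incidences :: "'v list \<Rightarrow> nat list \<Rightarrow> 'v \<times> nat \<Rightarrow> int" where
  "walk_incidences (z1 # z2 # zs) (c # cs) x =
     (if x = (z1, c) then 1 else 0) + (if x = (z2, c) then 1 else 0) + walk_incidences (z2 # zs) cs x"
| "walk_incidences _ _ x = 0"

fun coloured_walk :: "(nat \<Rightarrow> 'v \<Rightarrow> 'v \<Rightarrow> bool) \<Rightarrow> 'v list \<Rightarrow> nat list \<Rightarrow> bool" where
  "coloured_walk G (z1 # z2 # zs) (c # cs) \<longleftrightarrow> G c z1 z2 \<and> coloured_walk G (z2 # zs) cs"
| "coloured_walk G _ _ \<longleftrightarrow> True"

lemma walk_incidences_notin: "v \<notin> set zs \<Longrightarrow> walk_incidences zs cs (v, i) = 0"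
  by (induction zs cs "(v, i)" rule: walk_incidences.induct) auto

lemma walk_incidences_append:
  "length cs1 = length xs \<Longrightarrow>
   walk_incidences (xs @ z # ys) (cs1 @ cs2) x = walk_incidences (xs @ [z]) cs1 x + walk_incidences (z # ys) cs2 x"
proof (induction xs arbitrary: cs1)
  case (Cons x1 xs)
  then obtain c cs1' where "cs1 = c # cs1'" "length cs1' = length xs" by (cases cs1) auto
  then show ?case using Cons.IH by (cases xs) auto
qed simp

lemma coloured_walk_append:
  "length cs1 = length xs \<Longrightarrow>
   coloured_walk G (xs @ z # ys) (cs1 @ cs2) \<longleftrightarrow> coloured_walk G (xs @ [z]) cs1 \<and> coloured_walk G (z # ys) cs2"
proof (induction xs arbitrary: cs1)
  case (Cons x1 xs)
  then obtain c cs1' where "cs1 = c # cs1'" "length cs1' = length xs" by (cases cs1) auto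
  then show ?case using Cons.IH by (cases xs) auto
qed simp

lemma walk_incidences_rev:
  "length zs = Suc (length cs) \<Longrightarrow> walk_incidences (rev zs) (rev cs) x = walk_incidences zs cs x"
proof (induction cs arbitrary: zs)
  case Nil
  then obtain z where "zs = [z]" by (cases zs) auto
  then show ?case by simp
next
  case (Cons c cs)
  then obtain z1 z2 zs' where z: "zs = z1 # z2 # zs'" "length zs' = length cs"
    by (metis Suc_length_conv)
  then have "walk_incidences (rev zs) (rev (c # cs)) x =
      walk_incidences (rev zs' @ [z2]) (rev cs) x + walk_incidences [z2, z1] [c] x"
    using walk_incidences_append[of "rev cs" "rev zs'" z2 "[z1]" "[c]" x] by simp
  then show ?case using Cons.IH[of "z2 # zs'"] z by simp
qed

lemma coloured_walk_rev:
  assumes "length zs = Suc (length cs)" and "\<forall>c\<in>set cs. \<forall>u w. G c u w \<longrightarrow> G c w u"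
  shows "coloured_walk G (rev zs) (rev cs) \<longleftrightarrow> coloured_walk G zs cs"
  using assms
proof (induction cs arbitrary: zs)
  case Nil
  then obtain z where "zs = [z]" by (cases zs) auto
  then show ?case by simp
next
  case (Cons c cs)
  then obtain z1 z2 zs' where z: "zs = z1 # z2 # zs'" "length zs' = length cs"
    by (metis Suc_length_conv)
  have sym: "\<forall>u w. G c u w \<longrightarrow> G c w u" "\<forall>c\<in>set cs. \<forall>u w. G c u w \<longrightarrow> G c w u"
    using Cons.prems(2) by simp_all
  have "coloured_walk G (rev zs) (rev (c # cs)) \<longleftrightarrow>
      coloured_walk G (rev zs' @ [z2]) (rev cs) \<and> G c z2 z1"
    using coloured_walk_append[of "rev cs" "rev zs'" G z2 "[z1]" "[c]"] z by simp
  moreover have "coloured_walk G (rev zs' @ [z2]) (rev cs) \<longleftrightarrow> coloured_walk G (z2 # zs') cs"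
    using Cons.IH[of "z2 # zs'", OF _ sym(2)] z(2) by simp
  moreover have "G c z2 z1 \<longleftrightarrow> G c z1 z2" using sym(1) by blast
  ultimately show ?case unfolding z(1) by auto
qed

lemma walk_incidences_last_le_1:
  "distinct (zs @ [z]) \<Longrightarrow> length zs = length cs \<Longrightarrow> walk_incidences (zs @ [z]) cs (z, c) \<le> 1"
proof (induction zs arbitrary: cs)
  case (Cons z1 zs)
  then obtain c1 cs' where "cs = c1 # cs'" "length zs = length cs'" by (cases cs) auto
  then show ?case using Cons by (cases zs) auto
qed simp

lemma walk_incidences_join:
  assumes "length ys = Suc (length cs)" "length zs = Suc (length ds)"
  shows "walk_incidences (ys @ rev zs) (cs @ c # rev ds) x = walk_incidences ys cs x +
    (if x = (last ys, c) then 1 else 0) + (if x = (last zs, c) then 1 else 0) + walk_incidences zs ds x"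
proof -
  have "ys \<noteq> []" using assms(1) by auto
  then have ys: "butlast ys @ [last ys] = ys" "length cs = length (butlast ys)"
    using assms(1) by (simp_all add: append_butlast_last_id)
  obtain z zs' where z: "rev zs = z # zs'" using assms(2) by (cases "rev zs") auto
  then have z_last: "z = last zs" using hd_rev[of zs] by simp
  have "walk_incidences (ys @ rev zs) (cs @ c # rev ds) x =
      walk_incidences ys cs x + walk_incidences (last ys # rev zs) (c # rev ds) x"
    using walk_incidences_append[OF ys(2), of "last ys" "rev zs" "c # rev ds" x] ys(1)
    by (metis append.assoc append_Cons append_Nil)
  moreover have "walk_incidences (last ys # rev zs) (c # rev ds) x = (if x = (last ys, c) then 1 else 0) +
      (if x = (last zs, c) then 1 else 0) + walk_incidences (rev zs) (rev ds) x"
    unfolding z z_last by simp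
  ultimately show ?thesis using walk_incidences_rev[OF assms(2), of x] by linarith
qed

lemma coloured_walk_join:
  assumes "length ys = Suc (length cs)" "length zs = Suc (length ds)"
    and "\<forall>c\<in>set ds. \<forall>u w. G c u w \<longrightarrow> G c w u"
  shows "coloured_walk G (ys @ rev zs) (cs @ c # rev ds) \<longleftrightarrow>
    coloured_walk G ys cs \<and> G c (last ys) (last zs) \<and> coloured_walk G zs ds"
proof -
  have "ys \<noteq> []" using assms(1) by auto
  then have ys: "butlast ys @ [last ys] = ys" "length cs = length (butlast ys)"
    using assms(1) by (simp_all add: append_butlast_last_id)
  obtain z zs' where z: "rev zs = z # zs'" using assms(2) by (cases "rev zs") auto
  then have z_last: "z = last zs" using hd_rev[of zs] by simp
  have "coloured_walk G (ys @ rev zs) (cs @ c # rev ds) \<longleftrightarrow>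
      coloured_walk G ys cs \<and> coloured_walk G (last ys # rev zs) (c # rev ds)"
    using coloured_walk_append[OF ys(2), of G "last ys" "rev zs" "c # rev ds"] ys(1)
    by (metis append.assoc append_Cons append_Nil)
  moreover have "coloured_walk G (last ys # rev zs) (c # rev ds) \<longleftrightarrow>
      G c (last ys) (last zs) \<and> coloured_walk G (rev zs) (rev ds)"
    unfolding z z_last by simp
  ultimately show ?thesis using coloured_walk_rev[OF assms(2,3)] by simp
qed

lemma Cons_append_snoc_split: "a # xs @ [y] = butlast (a # xs) @ last (a # xs) # [y]"
proof -
  have "butlast (a # xs) @ [last (a # xs)] = a # xs" by (rule append_butlast_last_id) simp
  then show ?thesis by (metis append.assoc append_Cons append_Nil)
qed

lemma tree_branch_incidences:
  "tree_branch a pc cf xs \<Longrightarrow>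
   int (card {w \<in> set xs. pc w = x}) \<le> walk_incidences (a # xs) (map cf [0..<length xs]) x"
proof (induction xs rule: rev_induct)
  case (snoc y xs)
  have br: "tree_branch a pc cf xs" "y \<notin> set xs" "pc y = (last (a # xs), cf (length xs))"
    using snoc.prems by (simp_all add: tree_branch_snoc)
  have len: "length (map cf [0..<length xs]) = length (butlast (a # xs))" by simp
  have "walk_incidences (a # xs @ [y]) (map cf [0..<length xs] @ [cf (length xs)]) x =
      walk_incidences (butlast (a # xs) @ [last (a # xs)]) (map cf [0..<length xs]) x +
      walk_incidences [last (a # xs), y] [cf (length xs)] x"
    unfolding Cons_append_snoc_split[of a xs y] using walk_incidences_append[OF len] by simp
  then have "walk_incidences (a # xs @ [y]) (map cf [0..<length (xs @ [y])]) x =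
      walk_incidences (a # xs) (map cf [0..<length xs]) x + walk_incidences [last (a # xs), y] [cf (length xs)] x"
    by simp
  moreover have "card {w \<in> set (xs @ [y]). pc w = x} = card {w \<in> set xs. pc w = x} + (if pc y = x then 1 else 0)"
  proof -
    have "{w \<in> set (xs @ [y]). pc w = x} =
        (if pc y = x then insert y {w \<in> set xs. pc w = x} else {w \<in> set xs. pc w = x})"
      by auto
    then show ?thesis using br(2) by simp
  qed
  ultimately show ?case using snoc.IH[OF br(1)] br(3) by auto
qed simp

lemma tree_branch_coloured_walk:
  "tree_branch a pc cf xs \<Longrightarrow> \<forall>w\<in>set xs. G (snd (pc w)) (fst (pc w)) w \<Longrightarrow>
   coloured_walk G (a # xs) (map cf [0..<length xs])"
proof (induction xs rule: rev_induct)
  case (snoc y xs)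
  have br: "tree_branch a pc cf xs" "pc y = (last (a # xs), cf (length xs))"
    using snoc.prems by (simp_all add: tree_branch_snoc)
  have len: "length (map cf [0..<length xs]) = length (butlast (a # xs))" by simp
  have "coloured_walk G (a # xs @ [y]) (map cf [0..<length xs] @ [cf (length xs)]) \<longleftrightarrow>
      coloured_walk G (butlast (a # xs) @ [last (a # xs)]) (map cf [0..<length xs]) \<and>
      coloured_walk G [last (a # xs), y] [cf (length xs)]"
    unfolding Cons_append_snoc_split[of a xs y] using coloured_walk_append[OF len] by simp
  then have "coloured_walk G (a # xs @ [y]) (map cf [0..<length (xs @ [y])]) \<longleftrightarrow>
      coloured_walk G (a # xs) (map cf [0..<length xs]) \<and> coloured_walk G [last (a # xs), y] [cf (length xs)]"
    by simp
  then show ?case using snoc br by auto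
qed simp

context joined_host
begin

lemma valid_state_consume:
  assumes st: "valid_state J \<mu>" and feas: "feasible (J \<union> S) (\<lambda>x. \<mu> x - f x)"
    and S: "finite S" "S \<subseteq> V" and f: "\<And>x. f x \<ge> 0" "\<And>v i. v \<notin> J \<union> S \<Longrightarrow> f (v, i) = 0"
  shows "valid_state (J \<union> S) (\<lambda>x. \<mu> x - f x)"
proof -
  have "\<mu> x - f x \<le> int D" for x using valid_stateD(4)[OF st, of x] f(1)[of x] by linarith
  then show ?thesis using st feas S f(2) unfolding valid_state_def by auto
qed

lemma tree_from_valid_state:
  assumes st: "valid_state J \<mu>" and a: "a \<in> J" and tree: "tree_from J \<mu> a W pc"
  shows "valid_state (J \<union> W) (\<lambda>x. \<mu> x - nchildren W pc x)"
proof (rule valid_state_consume[OF st])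
  show "feasible (J \<union> W) (\<lambda>x. \<mu> x - nchildren W pc x)" "finite W" "W \<subseteq> V"
    using tree by (simp_all add: tree_from_def)
  show "nchildren W pc (v, i) = 0" if "v \<notin> J \<union> W" for v i
    using tree that a by (intro nchildren_eq_0) (auto simp: tree_from_def)
qed (rule nchildren_nonneg)

lemma greedy_path:
  assumes "valid_state J \<mu>" "a \<in> J" "set cs \<subseteq> {1..t}" "cs \<noteq> [] \<longrightarrow> \<mu> (a, hd cs) \<ge> 1"
    "int (card J) + int (length cs) \<le> capacity"
  shows "\<exists>vs. length vs = length cs \<and> distinct vs \<and> set vs \<inter> J = {} \<and> set vs \<subseteq> V \<and>
    coloured_walk G (a # vs) cs \<and> valid_state (J \<union> set vs) (\<lambda>x. \<mu> x - walk_incidences (a # vs) cs x)"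
  using assms
proof (induction cs arbitrary: J \<mu> a)
  case Nil
  then show ?case by (intro exI[of _ "[]"]) simp
next
  case (Cons c cs)
  note st = valid_stateD[OF Cons.prems(1)]
  have "admissible J \<mu>" using st(1,2,4) Cons.prems(5) unfolding admissible_def by simp
  then obtain v where v: "v \<in> V" "v \<notin> J" "G c a v"
      "feasible (insert v J) (\<lambda>x. \<mu> x - (if x = (a, c) then 1 else 0))"
    using feasible_add_neighbour[of J \<mu> a c] Cons.prems(2,3,4) st(3) by auto
  define \<mu>' where "\<mu>' = (\<lambda>x. \<mu> x - ((if x = (a, c) then 1 else 0) + (if x = (v, c) then 1 else 0)))"
  have "feasible (insert v J) \<mu>'" unfolding \<mu>'_def by (rule feasible_mono[OF v(4)]) simp
  then have "valid_state (J \<union> {v}) \<mu>'"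
    unfolding \<mu>'_def using v Cons.prems(2) by (intro valid_state_consume[OF Cons.prems(1)]) auto
  moreover have "cs \<noteq> [] \<longrightarrow> \<mu>' (v, hd cs) \<ge> 1"
    using st(5)[OF v(2)] v(2) Cons.prems(2) D_ge_3 by (auto simp: \<mu>'_def)
  moreover have "int (card (J \<union> {v})) + int (length cs) \<le> capacity"
    using Cons.prems(5) v(2) st(2) by simp
  ultimately obtain vs where vs: "length vs = length cs" "distinct vs" "set vs \<inter> (J \<union> {v}) = {}"
      "set vs \<subseteq> V" "coloured_walk G (v # vs) cs"
      "valid_state (J \<union> {v} \<union> set vs) (\<lambda>x. \<mu>' x - walk_incidences (v # vs) cs x)"
    using Cons.IH[of "J \<union> {v}" \<mu>' v] Cons.prems(3) by auto
  have "(\<lambda>x. \<mu>' x - walk_incidences (v # vs) cs x) = (\<lambda>x. \<mu> x - walk_incidences (a # v # vs) (c # cs) x)"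
    by (auto simp: \<mu>'_def)
  then show ?case
    using vs v by (intro exI[of _ "v # vs"]) (auto simp: insert_commute)
qed

end

section \<open>Connecting paths\<close>

context joined_host
begin

lemma s_joined_edge:
  assumes "A \<subseteq> V" "B \<subseteq> V" "s \<le> card A" "s \<le> card B" "c \<in> {1..t}"
  shows "\<exists>\<alpha>\<in>A. \<exists>\<beta>\<in>B. G c \<alpha> \<beta>"
proof -
  have "finite A" using assms(1) finite_V finite_subset by blast
  then have "A \<times> {c} \<subseteq> V \<times> {1..t} \<and> B \<subseteq> V \<and> card (A \<times> {c}) \<ge> s \<and> card B \<ge> s"
    using assms by (auto simp: card_cartesian_product)
  then have "\<exists>(w, i) \<in> A \<times> {c}. \<exists>y \<in> B. G i w y"
    using s_joined unfolding s_joined_def by blast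
  then show ?thesis by blast
qed

text \<open>Two branches grown from a and from b, closed by an edge of colour c between their ends,
  form a path whose embedding consumes no more budget than the two trees did.\<close>

lemma path_through_two_trees:
  assumes TA: "tree_from J \<mu> a WA pcA"
    and TB: "tree_from (J \<union> WA) (\<lambda>x. \<mu> x - nchildren WA pcA x) b WB pcB"
    and A: "tree_branch a pcA cfA xsA" "set xsA \<subseteq> WA"
    and B: "tree_branch b pcB cfB xsB" "set xsB \<subseteq> WB" "\<forall>l<length xsB. cfB l \<in> {1..t}"
    and edge: "G c (last (a # xsA)) (last (b # xsB))"
  defines "cs \<equiv> map cfA [0..<length xsA] @ c # rev (map cfB [0..<length xsB])"
  shows "coloured_walk G (a # xsA @ rev xsB @ [b]) cs"
    and "feasible (J \<union> set (xsA @ rev xsB)) (\<lambda>x. \<mu> x - walk_incidences (a # xsA @ rev xsB @ [b]) cs x)"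
proof -
  have TA': "finite WA" "WA \<subseteq> V" "WA \<inter> J = {}"
      "\<forall>w\<in>WA. G (snd (pcA w)) (fst (pcA w)) w"
    using TA unfolding tree_from_def by simp_all
  have TB': "finite WB" "WB \<subseteq> V" "WB \<inter> (J \<union> WA) = {}"
      "feasible (J \<union> WA \<union> WB) (\<lambda>x. \<mu> x - nchildren WA pcA x - nchildren WB pcB x)"
      "\<forall>w\<in>WB. G (snd (pcB w)) (fst (pcB w)) w"
    using TB unfolding tree_from_def by simp_all
  have sym: "\<forall>c\<in>set (map cfB [0..<length xsB]). \<forall>u w. G c u w \<longrightarrow> G c w u"
    using B(3) G_sym by auto
  have "coloured_walk G (a # xsA) (map cfA [0..<length xsA])"
    using tree_branch_coloured_walk[OF A(1)] TA'(4) A(2) by blast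
  moreover have "coloured_walk G (b # xsB) (map cfB [0..<length xsB])"
    using tree_branch_coloured_walk[OF B(1)] TB'(5) B(2) by blast
  ultimately have "coloured_walk G ((a # xsA) @ rev (b # xsB)) cs"
    unfolding cs_def using coloured_walk_join[where ys = "a # xsA" and cs = "map cfA [0..<length xsA]" and zs = "b # xsB" and c = c, OF _ _ sym] edge
    by simp
  then show "coloured_walk G (a # xsA @ rev xsB @ [b]) cs" by simp
  define pc where "pc = (\<lambda>w. if w \<in> WA then pcA w else pcB w)"
  have disj: "WA \<inter> WB = {}" using TB'(3) by blast
  have split: "{w \<in> S \<union> T. pc w = x} = {w \<in> S. pcA w = x} \<union> {w \<in> T. pcB w = x}"
    if "S \<subseteq> WA" "T \<subseteq> WB" for S T x
    using that disj by (auto simp: pc_def)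
  have card_split: "nchildren (S \<union> T) pc x = int (card {w \<in> S. pcA w = x}) + int (card {w \<in> T. pcB w = x})"
    if "S \<subseteq> WA" "T \<subseteq> WB" for S T x
  proof -
    have "finite S" "finite T" using that TA'(1) TB'(1) finite_subset by auto
    then show ?thesis unfolding nchildren_def split[OF that] using that disj
      by (subst card_Un_disjoint) auto
  qed
  have feas: "feasible (J \<union> (WA \<union> WB)) (\<lambda>x. \<mu> x - nchildren (WA \<union> WB) pc x)"
    using TB'(4) card_split[of WA WB] by (simp add: Un_assoc nchildren_def algebra_simps)
  have edges: "\<forall>w\<in>WA \<union> WB. G (snd (pc w)) (fst (pc w)) w \<and> w \<in> V"
  proof
    fix w assume w: "w \<in> WA \<union> WB"
    show "G (snd (pc w)) (fst (pc w)) w \<and> w \<in> V"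
    proof (cases "w \<in> WA")
      case True
      then show ?thesis using TA'(2,4) unfolding pc_def by auto
    next
      case False
      then show ?thesis using w TB'(2,5) unfolding pc_def by auto
    qed
  qed
  have pruned: "feasible (J \<union> set (xsA @ rev xsB)) (\<lambda>x. \<mu> x - nchildren (set (xsA @ rev xsB)) pc x)"
    using A(2) B(2) TA'(1,3) TB'(1,3) by (intro feasible_prune[OF feas _ _ _ edges]) auto
  have bound: "nchildren (set (xsA @ rev xsB)) pc x \<le> walk_incidences (a # xsA @ rev xsB @ [b]) cs x" for x
  proof -
    have "nchildren (set (xsA @ rev xsB)) pc x =
        int (card {w \<in> set xsA. pcA w = x}) + int (card {w \<in> set xsB. pcB w = x})"
      using card_split[OF A(2) B(2)] by simp
    moreover have "walk_incidences (a # xsA @ rev xsB @ [b]) cs x =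
        walk_incidences (a # xsA) (map cfA [0..<length xsA]) x + (if x = (last (a # xsA), c) then 1 else 0) +
        (if x = (last (b # xsB), c) then 1 else 0) + walk_incidences (b # xsB) (map cfB [0..<length xsB]) x"
    proof -
      have "a # xsA @ rev xsB @ [b] = (a # xsA) @ rev (b # xsB)" by simp
      then show ?thesis unfolding cs_def by (simp only:) (rule walk_incidences_join; simp)
    qed
    moreover have "0 \<le> (if x = (last (a # xsA), c) then 1 else 0) + (if x = (last (b # xsB), c) then 1 else (0::int))"
      by simp
    ultimately show ?thesis
      using tree_branch_incidences[OF A(1), of x] tree_branch_incidences[OF B(1), of x] by linarith
  qed
  show "feasible (J \<union> set (xsA @ rev xsB)) (\<lambda>x. \<mu> x - walk_incidences (a # xsA @ rev xsB @ [b]) cs x)"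
    by (rule feasible_mono[OF pruned], rule diff_left_mono, rule bound)
qed

text \<open>The complete trees grown from a and b have at least s leaves each, so s-joinedness yields a
  colour-c edge between their leaf sets.\<close>

lemma connecting_path:
  assumes st: "valid_state J \<mu>" and ab: "a \<in> J" "b \<in> J" "a \<noteq> b"
    and cols: "set csA \<subseteq> {1..t}" "c \<in> {1..t}" "set csB \<subseteq> {1..t}"
    and len: "length csA = Suc m" "length csB = Suc m"
    and slack: "\<mu> (a, hd csA) \<ge> 1" "\<mu> (b, last csB) \<ge> 1"
    and leaves: "s \<le> branching ^ m" and room: "int (card J) + 2 * int (tree_size m) \<le> capacity + 1"
  shows "\<exists>vs. length vs = 2 * m + 2 \<and> distinct vs \<and> set vs \<inter> J = {} \<and> set vs \<subseteq> V \<and>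
    coloured_walk G (a # vs @ [b]) (csA @ c # csB) \<and>
    feasible (J \<union> set vs) (\<lambda>x. \<mu> x - walk_incidences (a # vs @ [b]) (csA @ c # csB) x)"
proof -
  define cfA where "cfA = (\<lambda>l. csA ! l)"
  define cfB where "cfB = (\<lambda>l. rev csB ! l)"
  have map_cf: "map cfA [0..<Suc m] = csA" "map cfB [0..<Suc m] = rev csB"
    using len map_nth[of csA] map_nth[of "rev csB"] by (simp_all add: cfA_def cfB_def)
  have cols': "cfA l \<in> {1..t}" "cfB l \<in> {1..t}" if "l \<le> m" for l
  proof -
    have "csA ! l \<in> set csA" "rev csB ! l \<in> set (rev csB)"
      using len that nth_mem[of l csA] nth_mem[of l "rev csB"] by simp_all
    then show "cfA l \<in> {1..t}" "cfB l \<in> {1..t}" using cols(1,3) by (auto simp: cfA_def cfB_def)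
  qed
  have "csA \<noteq> []" "rev csB \<noteq> []" using len by auto
  then have "hd csA = cfA 0" "last csB = cfB 0"
    unfolding cfA_def cfB_def by (simp_all add: hd_conv_nth flip: hd_rev)
  note slack = slack[unfolded this]
  obtain WA pcA LA where A: "complete_tree J \<mu> a cfA m WA pcA LA"
    using complete_tree_exists[OF st ab(1), of cfA m] slack(1) cols' room by fastforce
  have TA: "tree_from J \<mu> a WA pcA" "card WA = tree_size m" "LA \<subseteq> WA" "card LA = branching ^ m"
      "\<forall>x\<in>LA. \<exists>xs. length xs = Suc m \<and> last xs = x \<and> set xs \<subseteq> WA \<and> tree_branch a pcA cfA xs"
    using A unfolding complete_tree_def by simp_all
  have WA: "WA \<subseteq> V" "WA \<inter> J = {}" "\<forall>w\<in>WA. fst (pcA w) \<in> insert a WA"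
    using TA(1) unfolding tree_from_def by auto
  define J2 where "J2 = J \<union> WA"
  define \<mu>2 where "\<mu>2 = (\<lambda>x. \<mu> x - nchildren WA pcA x)"
  have st2: "valid_state J2 \<mu>2" unfolding J2_def \<mu>2_def using tree_from_valid_state[OF st ab(1) TA(1)] .
  have "nchildren WA pcA (b, cfB 0) = 0" using WA ab by (intro nchildren_eq_0) auto
  then have "\<mu>2 (b, cfB 0) \<ge> 1" using slack(2) by (simp add: \<mu>2_def)
  moreover have "int (card J2) + int (tree_size m) \<le> capacity + 1"
    using int_card_Un_le[of J WA] TA(2) room unfolding J2_def by linarith
  ultimately obtain WB pcB LB where B: "complete_tree J2 \<mu>2 b cfB m WB pcB LB"
    using complete_tree_exists[OF st2, of b cfB m] ab(2) cols' unfolding J2_def by fastforce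
  have TB: "tree_from J2 \<mu>2 b WB pcB" "LB \<subseteq> WB" "card LB = branching ^ m"
      "\<forall>x\<in>LB. \<exists>xs. length xs = Suc m \<and> last xs = x \<and> set xs \<subseteq> WB \<and> tree_branch b pcB cfB xs"
    using B unfolding complete_tree_def by simp_all
  have WB: "WB \<subseteq> V" "WB \<inter> J2 = {}" using TB(1) unfolding tree_from_def by auto
  have "LA \<subseteq> V" "LB \<subseteq> V" "s \<le> card LA" "s \<le> card LB"
    using TA(3,4) TB(2,3) WA(1) WB(1) leaves by auto
  then obtain \<alpha> \<beta> where \<alpha>\<beta>: "\<alpha> \<in> LA" "\<beta> \<in> LB" "G c \<alpha> \<beta>"
    using s_joined_edge[OF _ _ _ _ cols(2)] by blast
  obtain xsA where xsA: "length xsA = Suc m" "last xsA = \<alpha>" "set xsA \<subseteq> WA" "tree_branch a pcA cfA xsA"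
    using TA(5) \<alpha>\<beta>(1) by blast
  obtain xsB where xsB: "length xsB = Suc m" "last xsB = \<beta>" "set xsB \<subseteq> WB" "tree_branch b pcB cfB xsB"
    using TB(4) \<alpha>\<beta>(2) by blast
  have "G c (last (a # xsA)) (last (b # xsB))" using \<alpha>\<beta>(3) xsA(1,2) xsB(1,2) by auto
  moreover have "\<forall>l<length xsB. cfB l \<in> {1..t}" using cols' xsB(1) by simp
  moreover have "csA @ c # csB = map cfA [0..<length xsA] @ c # rev (map cfB [0..<length xsB])"
    using map_cf xsA(1) xsB(1) by simp
  ultimately have walk: "coloured_walk G (a # (xsA @ rev xsB) @ [b]) (csA @ c # csB)"
      "feasible (J \<union> set (xsA @ rev xsB))
         (\<lambda>x. \<mu> x - walk_incidences (a # (xsA @ rev xsB) @ [b]) (csA @ c # csB) x)"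
    using path_through_two_trees[OF TA(1) TB(1)[unfolded J2_def \<mu>2_def] xsA(4,3) xsB(4,3)] by simp_all
  have "distinct (xsA @ rev xsB)" "set (xsA @ rev xsB) \<inter> J = {}" "set (xsA @ rev xsB) \<subseteq> V"
    using xsA(3,4) xsB(3,4) WA WB unfolding tree_branch_def J2_def by auto
  then show ?thesis using walk xsA(1) xsB(1) by (intro exI[of _ "xsA @ rev xsB"]) simp
qed

text \<open>Longer connecting paths first walk greedily away from a and then connect.\<close>

lemma connecting_path_long:
  assumes st: "valid_state J \<mu>" and ab: "a \<in> J" "b \<in> J" "a \<noteq> b"
    and cols: "set cs \<subseteq> {1..t}" and len: "length cs = k + (2 * m + 3)"
    and slack: "\<mu> (a, hd cs) \<ge> 1" "\<mu> (b, last cs) \<ge> 1"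
    and leaves: "s \<le> branching ^ m" and room: "int (card J) + int k + 2 * int (tree_size m) \<le> capacity + 1"
  shows "\<exists>vs. length vs = k + (2 * m + 2) \<and> distinct vs \<and> set vs \<inter> J = {} \<and> set vs \<subseteq> V \<and>
    coloured_walk G (a # vs @ [b]) cs \<and> feasible (J \<union> set vs) (\<lambda>x. \<mu> x - walk_incidences (a # vs @ [b]) cs x)"
proof -
  define cs1 where "cs1 = take k cs"
  define csA where "csA = take (Suc m) (drop k cs)"
  define c where "c = drop k cs ! Suc m"
  define csB where "csB = drop (Suc (Suc m)) (drop k cs)"
  have split: "cs = cs1 @ csA @ c # csB" "length cs1 = k" "length csA = Suc m" "length csB = Suc m"
    using len id_take_nth_drop[of "Suc m" "drop k cs"] by (auto simp: cs1_def csA_def c_def csB_def)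
  have "tree_size m \<ge> 1" unfolding tree_size_def by (induction m) auto
  then have "int (card J) + int (length cs1) \<le> capacity" using room split(2) by linarith
  moreover have "cs1 \<noteq> [] \<longrightarrow> \<mu> (a, hd cs1) \<ge> 1" using slack(1) split(1) by auto
  ultimately obtain vs1 where vs1: "length vs1 = k" "distinct vs1" "set vs1 \<inter> J = {}" "set vs1 \<subseteq> V"
      "coloured_walk G (a # vs1) cs1" "valid_state (J \<union> set vs1) (\<lambda>x. \<mu> x - walk_incidences (a # vs1) cs1 x)"
    using greedy_path[OF st ab(1), of cs1] cols split by auto
  define a' where "a' = last (a # vs1)"
  define \<mu>1 where "\<mu>1 = (\<lambda>x. \<mu> x - walk_incidences (a # vs1) cs1 x)"
  have "a' \<in> set (a # vs1)" unfolding a'_def by (rule last_in_set) simp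
  then have a'_in: "a' \<in> J \<union> set vs1" "a' \<noteq> b" using ab vs1(3) by auto
  have a_vs1: "distinct (a # vs1)" using vs1(2,3) ab(1) by auto
  have "\<mu>1 (a', hd csA) \<ge> 1"
  proof (cases "vs1 = []")
    case True
    then show ?thesis using slack(1) split vs1(1) by (cases csA) (simp_all add: a'_def \<mu>1_def)
  next
    case False
    then have "a' \<in> set vs1" unfolding a'_def by simp
    then have "a' \<notin> J" "butlast (a # vs1) @ [a'] = a # vs1" "length (butlast (a # vs1)) = length cs1"
      using vs1(1,3) split(2) by (auto simp: a'_def)
    then show ?thesis
      using valid_stateD(5)[OF st] walk_incidences_last_le_1[of "butlast (a # vs1)" a' cs1 "hd csA"] a_vs1
        D_ge_3 by (simp add: \<mu>1_def)
  qed
  moreover have "\<mu>1 (b, last csB) \<ge> 1"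
  proof -
    have b: "b \<notin> set (a # vs1)" "last cs = last csB" using ab vs1(3) split(1,4) by auto
    then show ?thesis using slack(2) walk_incidences_notin[OF b(1)] by (simp add: \<mu>1_def)
  qed
  moreover have "int (card (J \<union> set vs1)) + 2 * int (tree_size m) \<le> capacity + 1"
    using int_card_Un_le[of J "set vs1"] distinct_card[OF vs1(2)] vs1(1) room by linarith
  ultimately obtain vs2 where vs2: "length vs2 = 2 * m + 2" "distinct vs2" "set vs2 \<inter> (J \<union> set vs1) = {}"
      "set vs2 \<subseteq> V" "coloured_walk G (a' # vs2 @ [b]) (csA @ c # csB)"
      "feasible (J \<union> set vs1 \<union> set vs2) (\<lambda>x. \<mu>1 x - walk_incidences (a' # vs2 @ [b]) (csA @ c # csB) x)"
    using connecting_path[OF vs1(6)[folded \<mu>1_def] a'_in(1) _ a'_in(2), of csA c csB m] ab(2) cols split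
      leaves by auto
  have "butlast (a # vs1) @ [a'] = a # vs1" unfolding a'_def by (rule append_butlast_last_id) simp
  then have walk: "a # (vs1 @ vs2) @ [b] = butlast (a # vs1) @ a' # vs2 @ [b]"
    by (metis append.assoc append_Cons append_Nil)
  have walk_len: "length cs1 = length (butlast (a # vs1))"
    using vs1(1) split(2) by (simp only: length_butlast length_Cons diff_Suc_1)
  have "walk_incidences (a # (vs1 @ vs2) @ [b]) cs x =
      walk_incidences (a # vs1) cs1 x + walk_incidences (a' # vs2 @ [b]) (csA @ c # csB) x" for x
    using walk_incidences_append[OF walk_len, of a' "vs2 @ [b]" "csA @ c # csB" x] unfolding walk split(1)
    by (simp add: a'_def)
  moreover have "coloured_walk G (a # (vs1 @ vs2) @ [b]) cs"
    using coloured_walk_append[OF walk_len, of G a' "vs2 @ [b]" "csA @ c # csB"] vs1(5) vs2(5)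
    unfolding walk split(1) by (simp add: a'_def)
  ultimately show ?thesis
    using vs1 vs2 by (intro exI[of _ "vs1 @ vs2"]) (auto simp: \<mu>1_def Un_assoc algebra_simps)
qed

end

section \<open>Extending embeddings of the guest graph\<close>

lemma path_edges_Cons2: "path_edges (x # y # r) = insert {x, y} (path_edges (y # r))"
  unfolding path_edges_def
proof (intro set_eqI iffI)
  fix e assume "e \<in> {{(x # y # r) ! j, (x # y # r) ! Suc j} |j. Suc j < length (x # y # r)}"
  then obtain j where "e = {(x # y # r) ! j, (x # y # r) ! Suc j}" "Suc j < length (x # y # r)" by blast
  then show "e \<in> insert {x, y} {{(y # r) ! j, (y # r) ! Suc j} |j. Suc j < length (y # r)}"
    by (cases j) auto
next
  fix e assume "e \<in> insert {x, y} {{(y # r) ! j, (y # r) ! Suc j} |j. Suc j < length (y # r)}"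
  then consider "e = {x, y}" | j where "e = {(y # r) ! j, (y # r) ! Suc j}" "Suc j < length (y # r)" by blast
  then show "e \<in> {{(x # y # r) ! j, (x # y # r) ! Suc j} |j. Suc j < length (x # y # r)}"
  proof cases
    case 1
    then show ?thesis by force
  next
    case (2 j)
    then show ?thesis by (intro CollectI exI[of _ "Suc j"]) simp
  qed
qed
lemma path_edges_short: "length p \<le> 1 \<Longrightarrow> path_edges p = {}"
  by (auto simp: path_edges_def)

lemma path_edges_subset: "e \<in> path_edges p \<Longrightarrow> e \<subseteq> set p"
  by (auto simp: path_edges_def)

lemma path_edges_rev_subset: "path_edges (rev p) \<subseteq> path_edges p"
proof
  fix e assume "e \<in> path_edges (rev p)"
  then obtain j where j: "e = {rev p ! j, rev p ! Suc j}" "Suc j < length p"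
    by (auto simp: path_edges_def)
  define k where "k = length p - Suc (Suc j)"
  have "rev p ! j = p ! Suc k" "rev p ! Suc j = p ! k"
    using j(2) by (simp_all add: rev_nth k_def Suc_diff_Suc)
  moreover have "Suc k < length p" using j(2) by (simp add: k_def)
  ultimately show "e \<in> path_edges p" using j(1) by (auto simp: path_edges_def)
qed

lemma path_edges_rev: "path_edges (rev p) = path_edges p"
  using path_edges_rev_subset[of p] path_edges_rev_subset[of "rev p"] by simp

lemma is_path_rev: "is_path E p \<Longrightarrow> is_path E (rev p)"
proof -
  assume p: "is_path E p"
  then have "path_edges (rev p) \<subseteq> E"
    unfolding path_edges_rev by (auto simp: is_path_def path_edges_def)
  then show "is_path E (rev p)" using p unfolding is_path_def path_edges_def by auto
qed

lemma path_edge_meets_middle: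
  assumes "e \<in> path_edges (u # np @ ends)" "length ends \<le> 1" "np \<noteq> []"
  shows "e \<inter> set np \<noteq> {}"
proof -
  obtain j where j: "e = {(u # np @ ends) ! j, (u # np @ ends) ! Suc j}" "Suc j < length (u # np @ ends)"
    using assms(1) by (auto simp: path_edges_def)
  show ?thesis
  proof (cases j)
    case 0
    then show ?thesis using j assms(3) by (cases np) auto
  next
    case (Suc k)
    then have "k < length np" using j(2) assms(2) by simp
    then show ?thesis using j(1) Suc by (auto simp: nth_append)
  qed
qed

lemma in_path_edges_snoc2: "{y, z} \<in> path_edges (xs @ [y, z])"
proof (induction xs)
  case (Cons x xs)
  then show ?case by (cases xs) (auto simp: path_edges_Cons2)
qed (simp add: path_edges_Cons2)

fun edge_colours :: "('h set \<Rightarrow> nat) \<Rightarrow> 'h list \<Rightarrow> nat list" where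
  "edge_colours col (x # y # r) = col {x, y} # edge_colours col (y # r)"
| "edge_colours col _ = []"

lemma length_edge_colours: "length (edge_colours col p) = length p - 1"
  by (induction col p rule: edge_colours.induct) auto

lemma set_edge_colours: "set (edge_colours col p) \<subseteq> col ` path_edges p"
  by (induction p rule: induct_list012) (auto simp: path_edges_Cons2)

lemma last_edge_colours: "last (edge_colours col (xs @ [y, z])) = col {y, z}"
proof (induction xs)
  case (Cons x xs)
  obtain a r where ar: "xs @ [y, z] = a # r" "r \<noteq> []" by (cases xs) auto
  then have "edge_colours col (a # r) \<noteq> []" by (cases r) auto
  then show ?case using Cons ar by simp
qed simp

lemma extend_inj_along:
  assumes np: "distinct np" "set np \<inter> W = {}" and vs: "length vs = length np" "distinct vs"
    "set vs \<inter> \<psi> ` W = {}" and inj: "inj_on \<psi> W"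
  shows "\<exists>\<psi>'. (\<forall>h\<in>W. \<psi>' h = \<psi> h) \<and> map \<psi>' np = vs \<and> inj_on \<psi>' (W \<union> set np) \<and>
    \<psi>' ` (W \<union> set np) = \<psi> ` W \<union> set vs"
proof -
  define \<psi>' where "\<psi>' = (\<lambda>h. case map_of (zip np vs) h of None \<Rightarrow> \<psi> h | Some v \<Rightarrow> v)"
  have out: "\<psi>' h = \<psi> h" if "h \<notin> set np" for h
  proof -
    have "map_of (zip np vs) h = None" using that map_of_zip_is_None[OF vs(1)[symmetric]] by simp
    then show ?thesis by (simp add: \<psi>'_def)
  qed
  have "\<psi>' (np ! j) = vs ! j" if "j < length np" for j
    using that map_of_zip_nth[OF vs(1)[symmetric] np(1)] vs(1) by (simp add: \<psi>'_def)
  then have map: "map \<psi>' np = vs" using vs(1) by (intro nth_equalityI) auto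
  have agree: "\<forall>h\<in>W. \<psi>' h = \<psi> h" using out np(2) by auto
  then have "\<psi>' ` W = \<psi> ` W" "inj_on \<psi>' W" using inj by (auto cong: inj_on_cong)
  moreover have "\<psi>' ` set np = set vs" "inj_on \<psi>' (set np)"
    using map vs(2) by (metis list.set_map, metis distinct_map)
  moreover have "W - set np = W" "set np - W = set np" using np(2) by auto
  ultimately have "\<psi>' ` (W \<union> set np) = \<psi> ` W \<union> set vs" "inj_on \<psi>' (W \<union> set np)"
    using vs(3) by (simp_all add: image_Un inj_on_Un Int_commute)
  then show ?thesis using agree map by blast
qed

locale host_guest = joined_host V t G s D n for V :: "'v set" and t G s D n +
  fixes VH :: "'h set" and EH :: "'h set set" and col :: "'h set \<Rightarrow> nat"
  assumes colgraph: "colgraph t VH EH col" and max_deg: "max_mon_deg_le t VH EH col D"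
    and card_VH: "int (card VH) \<le> int n - 6 * int s * int D"
begin

lemma finite_VH: "finite VH"
  using colgraph by (simp add: colgraph_def)

lemma edge_subset_VH: "e \<in> EH \<Longrightarrow> e \<subseteq> VH"
proof -
  assume "e \<in> EH"
  then obtain x y where "e = {x, y}" "x \<in> VH" "y \<in> VH" using colgraph unfolding colgraph_def by meson
  then show "e \<subseteq> VH" by simp
qed

lemma edge_colour: "e \<in> EH \<Longrightarrow> col e \<in> {1..t}"
  using colgraph by (simp add: colgraph_def)

lemma card_VH_le_capacity: "int (card VH) \<le> capacity"
proof -
  have "s * 1 \<le> s * D" using D_ge_3 by (intro mult_le_mono2) simp
  then have "int s \<le> int s * int D" by (metis mult_1_right of_nat_le_iff of_nat_mult)
  then show ?thesis using card_VH unfolding capacity_def by linarith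
qed

lemma finite_neighbours: "E \<subseteq> EH \<Longrightarrow> finite {y. {h, y} \<in> E \<and> P y}"
  using finite_VH edge_subset_VH by (auto intro: finite_subset[of _ VH])

lemma degc_less:
  assumes "E \<subseteq> EH" "{h, y} \<in> EH" "{h, y} \<notin> E"
  shows "degc E col (col {h, y}) h < degc EH col (col {h, y}) h"
  unfolding degc_def using assms by (intro psubset_card_mono finite_neighbours) auto

lemma degc_le_D: "h \<in> VH \<Longrightarrow> i \<in> {1..t} \<Longrightarrow> degc EH col i h \<le> D"
  using max_deg by (simp add: max_mon_deg_le_def)

lemma is_path_facts:
  assumes "is_path EH p" "length p \<ge> 2"
  shows "path_edges p \<subseteq> EH" "distinct p" "set p \<subseteq> VH"
proof -
  show edges: "path_edges p \<subseteq> EH" "distinct p" using assms(1) by (auto simp: is_path_def path_edges_def)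
  show "set p \<subseteq> VH"
  proof
    fix x assume "x \<in> set p"
    then obtain j where j: "j < length p" "x = p ! j" by (auto simp: in_set_conv_nth)
    then obtain k where "Suc k < length p" "j = k \<or> j = Suc k" using assms(2)
      by (metis Suc_lessI less_Suc_eq not0_implies_Suc numeral_2_eq_2 Suc_le_lessD)
    then show "x \<in> VH" using edges(1) edge_subset_VH j(2) by (auto simp: path_edges_def)
  qed
qed



definition budget :: "'h set \<Rightarrow> 'h set set \<Rightarrow> ('h \<Rightarrow> 'v) \<Rightarrow> 'v \<times> nat \<Rightarrow> int" where
  "budget W E \<psi> x = int D - int (degpre W E col \<psi> (fst x) (snd x))"

definition partial_embedding :: "'h set \<Rightarrow> 'h set set \<Rightarrow> ('h \<Rightarrow> 'v) \<Rightarrow> bool" where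
  "partial_embedding W E \<psi> \<longleftrightarrow> W \<subseteq> VH \<and> E \<subseteq> EH \<and> (\<forall>e\<in>E. e \<subseteq> W) \<and> inj_on \<psi> W \<and> \<psi> ` W \<subseteq> V \<and>
     (\<forall>x y. {x, y} \<in> E \<longrightarrow> G (col {x, y}) (\<psi> x) (\<psi> y)) \<and> feasible (\<psi> ` W) (budget W E \<psi>)"

lemma budget_le: "budget W E \<psi> x \<le> int D"
  by (simp add: budget_def)

lemma budget_outside: "v \<notin> \<psi> ` W \<Longrightarrow> budget W E \<psi> (v, i) = int D"
  by (simp add: budget_def degpre_def)

lemma budget_image: "inj_on \<psi> W \<Longrightarrow> h \<in> W \<Longrightarrow> budget W E \<psi> (\<psi> h, i) = int D - int (degc E col i h)"
  by (simp add: budget_def degpre_def)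

lemma degc_outside: "\<forall>e\<in>E. e \<subseteq> W \<Longrightarrow> h \<notin> W \<Longrightarrow> degc E col i h = 0"
  unfolding degc_def by (metis (no_types, lifting) Collect_empty_eq card.empty insert_subset)

lemma valid_state_budget:
  "partial_embedding W E \<psi> \<Longrightarrow> valid_state (\<psi> ` W) (budget W E \<psi>)"
  unfolding valid_state_def partial_embedding_def
  using finite_subset[OF _ finite_VH] budget_le budget_outside by auto

lemma budget_extend:
  assumes WW: "W \<subseteq> W'" and agree: "\<forall>h\<in>W. \<psi>' h = \<psi> h" and inj: "inj_on \<psi>' W'"
    and E: "\<forall>e\<in>E. e \<subseteq> W"
  shows "budget W' E \<psi>' = budget W E \<psi>"
proof
  fix x :: "'v \<times> nat"
  obtain v i where x: "x = (v, i)" by (cases x)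
  have inj_W: "inj_on \<psi> W" using inj WW agree by (metis inj_on_cong inj_on_subset)
  have img: "\<psi> ` W = \<psi>' ` W" using agree by auto
  show "budget W' E \<psi>' x = budget W E \<psi> x"
  proof (cases "v \<in> \<psi>' ` W'")
    case True
    then obtain h where h: "h \<in> W'" "v = \<psi>' h" by blast
    show ?thesis
    proof (cases "h \<in> W")
      case True
      then show ?thesis using h x budget_image[OF inj h(1)] budget_image[OF inj_W True] agree by simp
    next
      case False
      have "v \<notin> \<psi> ` W"
      proof
        assume "v \<in> \<psi> ` W"
        then obtain h' where "h' \<in> W" "v = \<psi>' h'" using img by auto
        then have "h' = h" using inj h WW inj_onD by (metis subsetD)
        then show False using False \<open>h' \<in> W\<close> by simp
      qed
      then show ?thesis using h x budget_image[OF inj h(1)] budget_outside degc_outside[OF E False] by simp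
    qed
  next
    case False
    then have "v \<notin> \<psi> ` W" using img WW by auto
    then show ?thesis using False x budget_outside by simp
  qed
qed

lemma degc_insert:
  assumes "insert {x, y} E \<subseteq> EH" "{x, y} \<notin> E" "x \<noteq> y"
  shows "degc (insert {x, y} E) col i h = degc E col i h + (if h = x \<and> col {x,y} = i then 1 else 0)
           + (if h = y \<and> col {x,y} = i then 1 else 0)"
proof -
  let ?S = "{z. {h, z} \<in> E \<and> col {h, z} = i}"
  have fS: "finite ?S" using finite_neighbours[of E] assms(1) by simp
  show ?thesis
  proof (cases "col {x,y} = i \<and> (h = x \<or> h = y)")
    case True
    define o' where "o' = (if h = x then y else x)"
    have ho: "{h, o'} = {x, y}" using True by (auto simp: o'_def)
    have e: "{z. {h, z} \<in> insert {x, y} E \<and> col {h, z} = i} = insert o' ?S"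
    proof (rule set_eqI, rule iffI)
      fix z assume z: "z \<in> {z. {h, z} \<in> insert {x, y} E \<and> col {h, z} = i}"
      show "z \<in> insert o' ?S"
      proof (cases "{h, z} = {x, y}")
        case True
        then have "z = o'" using ho \<open>x \<noteq> y\<close> by (auto simp: doubleton_eq_iff o'_def)
        then show ?thesis by simp
      next
        case False then show ?thesis using z by auto
      qed
    next
      fix z assume "z \<in> insert o' ?S"
      then show "z \<in> {z. {h, z} \<in> insert {x, y} E \<and> col {h, z} = i}" using ho True by auto
    qed
    have "o' \<notin> ?S" using ho assms(2) by auto
    then have "card (insert o' ?S) = Suc (card ?S)" using fS by simp
    moreover have "(if h = x \<and> col {x,y} = i then 1 else 0) + (if h = y \<and> col {x,y} = i then 1 else 0) = (1::nat)"
      using True \<open>x \<noteq> y\<close> by auto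
    ultimately show ?thesis unfolding degc_def e by simp
  next
    case False
    have e: "{z. {h, z} \<in> insert {x, y} E \<and> col {h, z} = i} = ?S"
    proof (rule set_eqI, rule iffI)
      fix z assume z: "z \<in> {z. {h, z} \<in> insert {x, y} E \<and> col {h, z} = i}"
      have "{h, z} \<noteq> {x, y}"
      proof
        assume hz: "{h, z} = {x, y}"
        then have "h = x \<or> h = y" by (auto simp: doubleton_eq_iff)
        moreover have "col {x,y} = i" using z hz by simp
        ultimately show False using False by blast
      qed
      then show "z \<in> ?S" using z by auto
    qed auto
    then show ?thesis using False unfolding degc_def by auto
  qed
qed

lemma budget_insert_edge:
  assumes inj: "inj_on \<psi> W" and xy: "x \<in> W" "y \<in> W" "x \<noteq> y" and EE: "insert {x, y} E \<subseteq> EH" "{x, y} \<notin> E"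
  shows "budget W (insert {x, y} E) \<psi> = (\<lambda>z. budget W E \<psi> z - ((if z = (\<psi> x, col {x,y}) then 1 else 0)
            + (if z = (\<psi> y, col {x,y}) then 1 else 0)))"
proof
  fix z :: "'v \<times> nat"
  obtain v i where z: "z = (v,i)" by (cases z)
  show "budget W (insert {x, y} E) \<psi> z = budget W E \<psi> z - ((if z = (\<psi> x, col {x,y}) then 1 else 0)
            + (if z = (\<psi> y, col {x,y}) then 1 else 0))"
  proof (cases "v \<in> \<psi> ` W")
    case True
    then obtain h where h: "h \<in> W" "v = \<psi> h" by blast
    have hx: "(\<psi> h = \<psi> x) = (h = x)" "(\<psi> h = \<psi> y) = (h = y)"
      using inj_on_eq_iff[OF inj h(1) xy(1)] inj_on_eq_iff[OF inj h(1) xy(2)] by auto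
    have e1: "(z = (\<psi> x, col {x,y})) = (h = x \<and> col {x,y} = i)" using hx z h(2) by auto
    have e2: "(z = (\<psi> y, col {x,y})) = (h = y \<and> col {x,y} = i)" using hx z h(2) by auto
    have m1: "budget W (insert {x, y} E) \<psi> z = int D - int (degc (insert {x, y} E) col i h)"
      using budget_image[OF inj h(1)] z h(2) by simp
    have m2: "budget W E \<psi> z = int D - int (degc E col i h)"
      using budget_image[OF inj h(1)] z h(2) by simp
    show ?thesis unfolding m1 m2 e1 e2 degc_insert[OF EE xy(3), of i h] by simp
  next
    case False
    then have "v \<noteq> \<psi> x" "v \<noteq> \<psi> y" using xy by auto
    then show ?thesis using False z budget_outside by simp
  qed
qed

lemma budget_add_path:
  "distinct p \<Longrightarrow> set p \<subseteq> W \<Longrightarrow> inj_on \<psi> W \<Longrightarrow> E \<union> path_edges p \<subseteq> EH \<Longrightarrow> path_edges p \<inter> E = {} \<Longrightarrow>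
   budget W (E \<union> path_edges p) \<psi> = (\<lambda>z. budget W E \<psi> z - walk_incidences (map \<psi> p) (edge_colours col p) z)"
proof (induction p rule: induct_list012)
  case (3 x y r)
  have pe: "path_edges (x # y # r) = insert {x,y} (path_edges (y # r))" by (rule path_edges_Cons2)
  have ih: "budget W (E \<union> path_edges (y # r)) \<psi> = (\<lambda>z. budget W E \<psi> z - walk_incidences (map \<psi> (y # r)) (edge_colours col (y # r)) z)"
    using "3.IH"(2) "3.prems" pe by auto
  have nin: "{x,y} \<notin> E \<union> path_edges (y # r)"
  proof
    assume "{x,y} \<in> E \<union> path_edges (y # r)"
    moreover have "{x,y} \<notin> E" using "3.prems"(5) pe by auto
    ultimately have "{x,y} \<in> path_edges (y # r)" by simp
    then have "x \<in> set (y # r)" using path_edges_subset by blast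
    then show False using "3.prems"(1) by simp
  qed
  have e2: "E \<union> path_edges (x # y # r) = insert {x,y} (E \<union> path_edges (y # r))" using pe by auto
  have xy: "x \<in> W" "y \<in> W" "x \<noteq> y" using "3.prems"(1,2) by auto
  have EE: "insert {x, y} (E \<union> path_edges (y # r)) \<subseteq> EH" using "3.prems"(4) e2 by simp
  show ?case unfolding e2 budget_insert_edge[OF "3.prems"(3) xy EE nin] ih by (auto simp: algebra_simps)
next
  case 1
  then show ?case by (simp add: path_edges_short)
next
  case (2 v)
  then show ?case by (simp add: path_edges_short)
qed


lemma coloured_walk_edges:
  "coloured_walk G (map \<psi> p) (edge_colours col p) \<Longrightarrow> path_edges p \<subseteq> EH \<Longrightarrow> {x, y} \<in> path_edges p \<Longrightarrow>
   G (col {x, y}) (\<psi> x) (\<psi> y)"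
proof (induction p rule: induct_list012)
  case (3 a b zs)
  have edge: "G (col {a, b}) (\<psi> a) (\<psi> b)" and walk: "coloured_walk G (map \<psi> (b # zs)) (edge_colours col (b # zs))"
    using "3.prems"(1) by auto
  show ?case
  proof (cases "{x, y} = {a, b}")
    case True
    have "col {a, b} \<in> {1..t}" using "3.prems"(2) edge_colour by (auto simp: path_edges_Cons2)
    then have "G (col {a, b}) (\<psi> b) (\<psi> a)" using G_sym edge by blast
    then show ?thesis using True edge by (auto simp: doubleton_eq_iff insert_commute)
  next
    case False
    then show ?thesis using "3.IH"(2) walk "3.prems"(2,3) by (auto simp: path_edges_Cons2)
  qed
qed (auto simp: path_edges_short)

lemma partial_embedding_add_path:
  assumes emb: "partial_embedding W E \<psi>" and path: "is_path EH p"
    and p: "p = u # np @ ends" and u: "u \<in> W" and ends: "set ends \<subseteq> W" "length ends \<le> 1"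
    and np: "np \<noteq> []" "set np \<inter> W = {}"
    and vs: "length vs = length np" "distinct vs" "set vs \<inter> \<psi> ` W = {}" "set vs \<subseteq> V"
    and walk: "coloured_walk G (\<psi> u # vs @ map \<psi> ends) (edge_colours col p)"
    and feas: "feasible (\<psi> ` W \<union> set vs)
      (\<lambda>x. budget W E \<psi> x - walk_incidences (\<psi> u # vs @ map \<psi> ends) (edge_colours col p) x)"
  shows "\<exists>\<psi>'. partial_embedding (W \<union> set p) (E \<union> path_edges p) \<psi>' \<and> (\<forall>h\<in>W. \<psi>' h = \<psi> h)"
proof -
  have I: "W \<subseteq> VH" "E \<subseteq> EH" "\<forall>e\<in>E. e \<subseteq> W" "inj_on \<psi> W" "\<psi> ` W \<subseteq> V"
    "\<forall>x y. {x, y} \<in> E \<longrightarrow> G (col {x, y}) (\<psi> x) (\<psi> y)"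
    using emb unfolding partial_embedding_def by simp_all
  have "length p \<ge> 2" using p np(1) by (cases np) auto
  then have pEH: "path_edges p \<subseteq> EH" and dp: "distinct p" and pV: "set p \<subseteq> VH"
    using is_path_facts[OF path] by auto
  have Wp: "W \<union> set p = W \<union> set np" using p u ends by auto
  obtain \<psi>' where \<psi>': "\<forall>h\<in>W. \<psi>' h = \<psi> h" "map \<psi>' np = vs" "inj_on \<psi>' (W \<union> set p)"
      "\<psi>' ` (W \<union> set p) = \<psi> ` W \<union> set vs"
    using extend_inj_along[OF _ np(2) vs(1-3) I(4)] dp p unfolding Wp by auto
  have map_p: "map \<psi>' p = \<psi> u # vs @ map \<psi> ends" using \<psi>'(1,2) p u ends by auto
  have disj: "path_edges p \<inter> E = {}"
    using path_edge_meets_middle[of _ u np ends] p ends(2) np I(3) by blast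
  have "budget (W \<union> set p) (E \<union> path_edges p) \<psi>' =
      (\<lambda>z. budget (W \<union> set p) E \<psi>' z - walk_incidences (map \<psi>' p) (edge_colours col p) z)"
    using budget_add_path[OF dp _ \<psi>'(3)] pEH I(2) disj by auto
  also have "budget (W \<union> set p) E \<psi>' = budget W E \<psi>" using budget_extend[OF _ \<psi>'(1,3) I(3)] by auto
  finally have budget: "budget (W \<union> set p) (E \<union> path_edges p) \<psi>' =
      (\<lambda>z. budget W E \<psi> z - walk_incidences (map \<psi>' p) (edge_colours col p) z)" .
  have edges: "\<forall>x y. {x, y} \<in> E \<union> path_edges p \<longrightarrow> G (col {x, y}) (\<psi>' x) (\<psi>' y)"
  proof (intro allI impI)
    fix x y assume xy: "{x, y} \<in> E \<union> path_edges p"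
    show "G (col {x, y}) (\<psi>' x) (\<psi>' y)"
    proof (cases "{x, y} \<in> E")
      case True
      then show ?thesis using I(3,6) \<psi>'(1) by auto
    next
      case False
      then show ?thesis using xy coloured_walk_edges[of \<psi>' p] walk map_p pEH by auto
    qed
  qed
  have "\<forall>e\<in>E \<union> path_edges p. e \<subseteq> W \<union> set p" using I(3) path_edges_subset[of _ p] by blast
  moreover have "W \<union> set p \<subseteq> VH" "E \<union> path_edges p \<subseteq> EH" "\<psi> ` W \<union> set vs \<subseteq> V"
    using I(1,2,5) pV pEH vs(4) by auto
  ultimately have "partial_embedding (W \<union> set p) (E \<union> path_edges p) \<psi>'"
    unfolding partial_embedding_def budget \<psi>'(4) map_p using \<psi>'(3) edges feas by blast
  then show ?thesis using \<psi>'(1) by blast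
qed

lemma budget_slack:
  assumes emb: "partial_embedding W E \<psi>" and u: "u \<in> W" and e: "{u, v} \<in> EH" and v: "v \<notin> W"
  shows "budget W E \<psi> (\<psi> u, col {u, v}) \<ge> 1"
proof -
  have I: "E \<subseteq> EH" "\<forall>e\<in>E. e \<subseteq> W" "inj_on \<psi> W" "W \<subseteq> VH"
    using emb by (auto simp: partial_embedding_def)
  have "{u, v} \<notin> E" using I(2) v by auto
  then have "degc E col (col {u, v}) u < degc EH col (col {u, v}) u" using degc_less[OF I(1) e] by simp
  moreover have "degc EH col (col {u, v}) u \<le> D" using degc_le_D edge_colour[OF e] u I(4) by auto
  ultimately show ?thesis using budget_image[OF I(3) u] by simp
qed

lemma card_new_vertices:
  assumes emb: "partial_embedding W E \<psi>" and p: "set p \<subseteq> VH" "set np \<subseteq> set p" "set np \<inter> W = {}"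
    and np: "distinct np"
  shows "card (\<psi> ` W) + length np \<le> card VH"
proof -
  have W: "W \<subseteq> VH" "inj_on \<psi> W" using emb by (simp_all add: partial_embedding_def)
  have "card (\<psi> ` W) + length np = card (W \<union> set np)"
    using card_image[OF W(2)] card_Un_disjoint[of W "set np"] distinct_card[OF np] p(3)
      finite_subset[OF W(1) finite_VH] by (simp add: Int_commute)
  also have "\<dots> \<le> card VH" using W(1) p(1,2) finite_VH by (intro card_mono) auto
  finally show ?thesis .
qed

lemma extend_pendant_path:
  assumes emb: "partial_embedding W E \<psi>" and path: "is_path EH (u # np)" and u: "u \<in> W"
    and np: "np \<noteq> []" "set np \<inter> W = {}"
  shows "\<exists>\<psi>'. partial_embedding (W \<union> set (u # np)) (E \<union> path_edges (u # np)) \<psi>' \<and> (\<forall>h\<in>W. \<psi>' h = \<psi> h)"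
proof -
  let ?cs = "edge_colours col (u # np)"
  obtain v r where np_eq: "np = v # r" using np(1) by (cases np) auto
  have "length (u # np) \<ge> 2" using np_eq by simp
  note path_facts = is_path_facts[OF path this]
  have cols: "set ?cs \<subseteq> {1..t}" using set_edge_colours[of col "u # np"] path_facts(1) edge_colour by blast
  have slack: "budget W E \<psi> (\<psi> u, hd ?cs) \<ge> 1"
    using budget_slack[OF emb u, of v] path_facts(1) np(2) np_eq by (auto simp: path_edges_Cons2)
  have room: "int (card (\<psi> ` W)) + int (length ?cs) \<le> capacity"
  proof -
    have "distinct np" using path_facts(2) by simp
    then have "card (\<psi> ` W) + length np \<le> card VH"
      using card_new_vertices[OF emb path_facts(3) set_subset_Cons np(2)] by simp
    then show ?thesis using card_VH_le_capacity by (simp add: length_edge_colours)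
  qed
  obtain vs where vs: "length vs = length ?cs" "distinct vs" "set vs \<inter> \<psi> ` W = {}" "set vs \<subseteq> V"
      "coloured_walk G (\<psi> u # vs) ?cs"
      "valid_state (\<psi> ` W \<union> set vs) (\<lambda>x. budget W E \<psi> x - walk_incidences (\<psi> u # vs) ?cs x)"
    using greedy_path[OF valid_state_budget[OF emb] imageI[OF u] cols _ room] slack by blast
  then show ?thesis
    using partial_embedding_add_path[OF emb path _ u _ _ np, of "[]" vs] valid_stateD(1)
    by (simp add: length_edge_colours)
qed

lemma extend_connecting_path:
  assumes emb: "partial_embedding W E \<psi>" and path: "is_path EH (u # np @ [w])"
    and uw: "u \<in> W" "w \<in> W" and np: "set np \<inter> W = {}" "length np = k + (2 * m + 2)"
    and depth: "s \<le> branching ^ m" "branching ^ m \<le> branching * s"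
  shows "\<exists>\<psi>'. partial_embedding (W \<union> set (u # np @ [w])) (E \<union> path_edges (u # np @ [w])) \<psi>' \<and>
    (\<forall>h\<in>W. \<psi>' h = \<psi> h)"
proof -
  let ?p = "u # np @ [w]" let ?cs = "edge_colours col ?p"
  obtain v r where np_eq: "np = v # r" using np(2) by (cases np) auto
  have "length ?p \<ge> 2" by simp
  note path_facts = is_path_facts[OF path this]
  have cols: "set ?cs \<subseteq> {1..t}" using set_edge_colours[of col ?p] path_facts(1) edge_colour by blast
  have slackA: "budget W E \<psi> (\<psi> u, hd ?cs) \<ge> 1"
    using budget_slack[OF emb uw(1), of v] path_facts(1) np(1) np_eq by (auto simp: path_edges_Cons2)
  have slackB: "budget W E \<psi> (\<psi> w, last ?cs) \<ge> 1"
  proof -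
    have "butlast np @ [last np] = np" using np_eq by simp
    then have split: "?p = (u # butlast np) @ [last np, w]" by (metis append.assoc append_Cons append_Nil)
    then have "{last np, w} \<in> path_edges ?p" using in_path_edges_snoc2 by metis
    then have edge: "{w, last np} \<in> EH" using path_facts(1) by (auto simp: insert_commute)
    have "last ?cs = col {last np, w}" unfolding split by (rule last_edge_colours)
    moreover have "last np \<notin> W" using np(1) last_in_set[of np] np_eq by blast
    ultimately show ?thesis using budget_slack[OF emb uw(2) edge] by (simp add: insert_commute)
  qed
  have room: "int (card (\<psi> ` W)) + int k + 2 * int (tree_size m) \<le> capacity + 1"
  proof -
    have "distinct np" "set np \<subseteq> set ?p" using path_facts(2) by auto
    then have "card (\<psi> ` W) + length np \<le> card VH"
      using card_new_vertices[OF emb path_facts(3) _ np(1)] by simp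
    then have "int (card (\<psi> ` W)) + int k + 2 \<le> int (card VH)" using np(2) by linarith
    moreover have "int (tree_size m) + 1 \<le> 2 * int (branching ^ m)"
      using tree_size_bound[of m] by linarith
    moreover have "int (branching ^ m) \<le> int (branching * s)" using depth(2) by linarith
    moreover have "int (branching * s) = int s * int D - int s"
      using D_ge_3 by (simp add: branching_def of_nat_diff algebra_simps)
    ultimately show ?thesis using card_VH unfolding capacity_def by linarith
  qed
  have ends: "\<psi> u \<in> \<psi> ` W" "\<psi> w \<in> \<psi> ` W" "\<psi> u \<noteq> \<psi> w"
    using uw path_facts(2) emb unfolding partial_embedding_def by (auto dest: inj_onD)
  have len: "length ?cs = k + (2 * m + 3)" using np(2) by (simp add: length_edge_colours)
  obtain vs where vs: "length vs = k + (2 * m + 2)" "distinct vs" "set vs \<inter> \<psi> ` W = {}"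
      "set vs \<subseteq> V" "coloured_walk G (\<psi> u # vs @ [\<psi> w]) ?cs"
      "feasible (\<psi> ` W \<union> set vs) (\<lambda>x. budget W E \<psi> x - walk_incidences (\<psi> u # vs @ [\<psi> w]) ?cs x)"
    using connecting_path_long[OF valid_state_budget[OF emb] ends cols len slackA slackB depth(1) room]
    by blast
  then show ?thesis
    using partial_embedding_add_path[OF emb path _ uw(1) _ _ _ np(1), of "[w]" vs] uw(2) np(2) np_eq by simp
qed

lemma extend_by_path:
  assumes emb: "partial_embedding W E \<psi>" and path: "is_path EH p"
    and inner: "set (butlast (tl p)) \<inter> W = {}" and ends: "hd p \<in> W \<or> last p \<in> W"
    and len: "length p \<ge> 2 * m + 4" and depth: "s \<le> branching ^ m" "branching ^ m \<le> branching * s"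
  shows "\<exists>\<psi>'. partial_embedding (W \<union> set p) (E \<union> path_edges p) \<psi>' \<and> (\<forall>h\<in>W. \<psi>' h = \<psi> h)"
proof -
  obtain q where q: "is_path EH q" "set (butlast (tl q)) \<inter> W = {}" "hd q \<in> W" "length q = length p"
      "set q = set p" "path_edges q = path_edges p"
  proof (cases "hd p \<in> W")
    case True
    then show ?thesis using that path inner by blast
  next
    case False
    have "p \<noteq> []" using len by auto
    then have "tl (rev p) = rev (butlast p)"
      by (metis append_butlast_last_id list.sel(3) rev.simps(2) rev_append rev_rev_ident rev_singleton_conv
          append_Cons append_Nil)
    then have "butlast (tl (rev p)) = rev (butlast (tl p))" by (simp add: butlast_rev butlast_tl)
    moreover have "hd (rev p) \<in> W" using False ends \<open>p \<noteq> []\<close> by (simp add: hd_rev)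
    ultimately show ?thesis
      using that[of "rev p"] is_path_rev[OF path] inner path_edges_rev[of p] by simp
  qed
  obtain u r where q_ur: "q = u # r" using q(4) len by (cases q) auto
  moreover have "r \<noteq> []" using q_ur q(4) len by auto
  ultimately have ur: "q = u # r" "r \<noteq> []" by simp_all
  define np where "np = butlast r"
  define z where "z = last r"
  have q_eq: "q = u # np @ [z]" using ur by (simp add: np_def z_def)
  have np_W: "set np \<inter> W = {}" and u: "u \<in> W" using q(2,3) ur by (simp_all add: np_def)
  have "\<exists>\<psi>'. partial_embedding (W \<union> set q) (E \<union> path_edges q) \<psi>' \<and> (\<forall>h\<in>W. \<psi>' h = \<psi> h)"
  proof (cases "z \<in> W")
    case True
    have "length np = (length np - (2 * m + 2)) + (2 * m + 2)" using q(4) q_eq len by simp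
    then show ?thesis using extend_connecting_path[OF emb _ u True np_W _ depth] q(1) unfolding q_eq by blast
  next
    case False
    then have "set (np @ [z]) \<inter> W = {}" using np_W by auto
    then show ?thesis using extend_pendant_path[OF emb _ u] q(1) unfolding q_eq by blast
  qed
  then show ?thesis using q(5,6) by simp
qed

lemma extend_isolated_vertex:
  assumes emb: "partial_embedding W E \<psi>" and z: "z \<in> VH" "z \<notin> W"
  shows "\<exists>\<psi>'. partial_embedding (insert z W) E \<psi>' \<and> (\<forall>h\<in>W. \<psi>' h = \<psi> h)"
proof -
  have I: "W \<subseteq> VH" "E \<subseteq> EH" "\<forall>e\<in>E. e \<subseteq> W" "inj_on \<psi> W" "\<psi> ` W \<subseteq> V"
    "\<forall>x y. {x, y} \<in> E \<longrightarrow> G (col {x, y}) (\<psi> x) (\<psi> y)" "feasible (\<psi> ` W) (budget W E \<psi>)"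
    using emb unfolding partial_embedding_def by simp_all
  have card: "int (card (\<psi> ` W)) + 1 \<le> int (card VH)"
    using card_new_vertices[OF emb, of "[z]" "[z]"] z by simp
  have "admissible (\<psi> ` W) (budget W E \<psi>)"
    unfolding admissible_def using I(7) finite_subset[OF I(1) finite_VH] card card_VH_le_capacity budget_le
    by simp
  moreover have "int (card (\<psi> ` W)) + int s * int D < int n"
  proof -
    have "int s * int D \<le> 6 * int s * int D" by simp
    then show ?thesis using card card_VH by linarith
  qed
  ultimately obtain v where v: "v \<in> V" "v \<notin> \<psi> ` W" "feasible (insert v (\<psi> ` W)) (budget W E \<psi>)"
    using feasible_add_vertex by blast
  define \<psi>' where "\<psi>' = \<psi>(z := v)"
  have agree: "\<forall>h\<in>W. \<psi>' h = \<psi> h" using z(2) by (auto simp: \<psi>'_def)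
  have img_W: "\<psi>' ` W = \<psi> ` W" by (rule image_cong) (use agree in auto)
  have "\<psi>' z = v" by (simp add: \<psi>'_def)
  then have img: "\<psi>' ` insert z W = insert v (\<psi> ` W)" using img_W by (simp only: image_insert)
  have "inj_on \<psi>' W" using I(4) agree by (metis inj_on_cong)
  moreover have "\<psi>' z \<notin> \<psi>' ` W" using v(2) img_W \<open>\<psi>' z = v\<close> by simp
  ultimately have inj: "inj_on \<psi>' (insert z W)" using z(2) by simp
  have "budget (insert z W) E \<psi>' = budget W E \<psi>" using budget_extend[OF _ agree inj I(3)] by auto
  then have "partial_embedding (insert z W) E \<psi>'"
    unfolding partial_embedding_def img using I(1-3,5,6) z(1) inj v(1,3) agree by auto
  then show ?thesis using agree by blast
qed

lemma extend_isolated_vertices: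
  assumes emb: "partial_embedding W E \<psi>" and F: "finite F" "F \<subseteq> VH - W"
  shows "\<exists>\<psi>'. partial_embedding (W \<union> F) E \<psi>' \<and> (\<forall>h\<in>W. \<psi>' h = \<psi> h)"
  using F
proof (induction F rule: finite_induct)
  case (insert z F)
  then obtain \<psi>1 where \<psi>1: "partial_embedding (W \<union> F) E \<psi>1" "\<forall>h\<in>W. \<psi>1 h = \<psi> h" by auto
  obtain \<psi>2 where "partial_embedding (insert z (W \<union> F)) E \<psi>2" "\<forall>h\<in>W \<union> F. \<psi>2 h = \<psi>1 h"
    using extend_isolated_vertex[OF \<psi>1(1)] insert by blast
  then show ?case using \<psi>1(2) by auto
qed (use emb in auto)

lemma partial_embedding_init:
  assumes "colgraph t VH0 EH0 col" "colsubgraph VH0 EH0 VH EH" "embedding V G VH0 EH0 col \<phi>"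
    "good V t G (2 * s) D VH0 EH0 col R0 \<phi>"
  shows "partial_embedding VH0 EH0 \<phi>"
proof -
  have "surplus (\<phi> ` VH0) (budget VH0 EH0 \<phi>) X = Rval V G D VH0 EH0 col R0 \<phi> X +
      int (card (Pset VH0 EH0 col R0 \<phi> \<inter> X))" for X
    unfolding surplus_def Rval_def budget_def by (simp add: case_prod_beta)
  then have "feasible (\<phi> ` VH0) (budget VH0 EH0 \<phi>)"
    using assms(4) unfolding good_def feasible_def by (metis add_increasing2 of_nat_0_le_iff)
  moreover have "\<forall>e\<in>EH0. e \<subseteq> VH0" using assms(1) unfolding colgraph_def by fastforce
  ultimately show ?thesis using assms(2,3) unfolding partial_embedding_def colsubgraph_def embedding_def by simp
qed

text \<open>Declaring every vertex a root makes the forest of the rooted structure edgeless, so the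
  parent term of \<open>Rval\<close> vanishes and goodness is exactly feasibility of the budget.\<close>

lemma partial_embedding_complete:
  assumes "partial_embedding VH EH \<psi>"
  shows "rooted VH EH VH" "embedding V G VH EH col \<psi>" "good V t G (2 * s) D VH EH col VH \<psi>"
proof -
  have I: "inj_on \<psi> VH" "\<psi> ` VH \<subseteq> V" "\<forall>x y. {x, y} \<in> EH \<longrightarrow> G (col {x, y}) (\<psi> x) (\<psi> y)"
    "feasible (\<psi> ` VH) (budget VH EH \<psi>)"
    using assms unfolding partial_embedding_def by simp_all
  show "embedding V G VH EH col \<psi>" using I by (simp add: embedding_def)
  have "Rval V G D VH EH col VH \<psi> X = surplus (\<psi> ` VH) (budget VH EH \<psi>) X" for X
    unfolding surplus_def Rval_def budget_def Pset_def by (simp add: case_prod_beta)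
  then show "good V t G (2 * s) D VH EH col VH \<psi>"
    using I(4) unfolding good_def feasible_def by simp
  have no_edges: "{e \<in> EH. \<not> e \<subseteq> VH} = {}" using edge_subset_VH by blast
  have "{y. reach {} x y} = {x}" for x :: 'h by (simp add: reach_def)
  then show "rooted VH EH VH"
    unfolding rooted_def Let_def no_edges by (auto simp: is_cycle_def is_path_def)
qed

lemma extend_path_constructible:
  assumes emb: "partial_embedding VH0 EH0 \<phi>" and pc: "path_constructible VH0 EH0 VH EH Ps"
    and long: "\<forall>p\<in>set Ps. length p \<ge> 2 * m + 4"
    and depth: "s \<le> branching ^ m" "branching ^ m \<le> branching * s"
  shows "\<exists>\<psi>. partial_embedding VH EH \<psi> \<and> (\<forall>x\<in>VH0. \<psi> x = \<phi> x)"
proof -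
  define W where "W k = VH0 \<union> (\<Union>j<k. set (Ps ! j))" for k
  define E where "E k = EH0 \<union> (\<Union>j<k. path_edges (Ps ! j))" for k
  have step: "\<forall>j<length Ps. is_path EH (Ps ! j) \<and> set (butlast (tl (Ps ! j))) \<inter> W j = {} \<and>
      (hd (Ps ! j) \<in> W j \<or> last (Ps ! j) \<in> W j)"
    using pc unfolding path_constructible_def W_def by auto
  have "k \<le> length Ps \<Longrightarrow> \<exists>\<psi>. partial_embedding (W k) (E k) \<psi> \<and> (\<forall>x\<in>VH0. \<psi> x = \<phi> x)" for k
  proof (induction k)
    case 0
    then show ?case using emb by (auto simp: W_def E_def)
  next
    case (Suc k)
    then have k: "k < length Ps" by simp
    obtain \<psi> where \<psi>: "partial_embedding (W k) (E k) \<psi>" "\<forall>x\<in>VH0. \<psi> x = \<phi> x"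
      using Suc by auto
    have "is_path EH (Ps ! k)" "set (butlast (tl (Ps ! k))) \<inter> W k = {}"
      "hd (Ps ! k) \<in> W k \<or> last (Ps ! k) \<in> W k" "length (Ps ! k) \<ge> 2 * m + 4"
      using step long k by auto
    then obtain \<psi>' where \<psi>': "partial_embedding (W k \<union> set (Ps ! k)) (E k \<union> path_edges (Ps ! k)) \<psi>'"
        "\<forall>h\<in>W k. \<psi>' h = \<psi> h"
      using extend_by_path[OF \<psi>(1) _ _ _ _ depth] by blast
    have "W k \<union> set (Ps ! k) = W (Suc k)" "E k \<union> path_edges (Ps ! k) = E (Suc k)"
      by (auto simp: W_def E_def lessThan_Suc)
    moreover have "\<forall>x\<in>VH0. \<psi>' x = \<phi> x" using \<psi>(2) \<psi>'(2) by (simp add: W_def)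
    ultimately show ?case using \<psi>'(1) by (intro exI[of _ \<psi>']) simp
  qed
  moreover have "E (length Ps) = EH"
  proof -
    have "(\<Union>j<length Ps. path_edges (Ps ! j)) = \<Union> (path_edges ` set Ps)"
      by (auto simp: in_set_conv_nth) (use nth_mem in blast)
    then show ?thesis using pc unfolding path_constructible_def E_def by simp
  qed
  ultimately obtain \<psi> where \<psi>: "partial_embedding (W (length Ps)) EH \<psi>" "\<forall>x\<in>VH0. \<psi> x = \<phi> x"
    by auto
  have "W (length Ps) \<union> (VH - W (length Ps)) = VH" using \<psi>(1) by (auto simp: partial_embedding_def)
  then obtain \<psi>' where "partial_embedding VH EH \<psi>'" "\<forall>h\<in>W (length Ps). \<psi>' h = \<psi> h"
    using extend_isolated_vertices[OF \<psi>(1), of "VH - W (length Ps)"] finite_VH by auto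
  then show ?thesis using \<psi>(2) by (auto simp: W_def)
qed

end

lemma power_between:
  fixes q s :: nat
  assumes "q \<ge> 2" "s \<ge> 1" "s \<le> q ^ k"
  shows "\<exists>m\<le>k. s \<le> q ^ m \<and> q ^ m \<le> q * s"
proof -
  define m where "m = (LEAST m. s \<le> q ^ m)"
  have "s \<le> q ^ m" "m \<le> k" using LeastI[of "\<lambda>m. s \<le> q ^ m" k] Least_le[of "\<lambda>m. s \<le> q ^ m" k] assms(3)
    by (simp_all add: m_def)
  moreover have "q ^ m \<le> q * s"
  proof (cases m)
    case 0
    then show ?thesis using assms(1,2) \<open>s \<le> q ^ m\<close> by simp
  next
    case (Suc l)
    then have "\<not> s \<le> q ^ l" using not_less_Least[of l "\<lambda>m. s \<le> q ^ m"] by (simp add: m_def)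
    then show ?thesis using Suc by simp
  qed
  ultimately show ?thesis by blast
qed

lemma le_power_ceiling_log:
  fixes q s :: nat
  assumes "q \<ge> 2" "s \<ge> 1"
  shows "s \<le> q ^ nat \<lceil>ln (real s) / ln (real q)\<rceil>"
proof -
  define c where "c = \<lceil>ln (real s) / ln (real q)\<rceil>"
  have lq: "ln (real q) > 0" using assms(1) by simp
  have "0 \<le> ln (real s) / ln (real q)" using assms(2) lq by simp
  then have c: "c \<ge> 0" unfolding c_def by linarith
  have "ln (real s) / ln (real q) \<le> real (nat c)" using c unfolding c_def by linarith
  then have "ln (real s) \<le> ln (real q ^ nat c)" using lq assms(1) by (simp add: pos_divide_le_eq ln_realpow)
  then have "real s \<le> real q ^ nat c" using assms by (subst (asm) ln_le_cancel_iff) auto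
  then show ?thesis unfolding c_def by (metis of_nat_le_iff of_nat_power)
qed

context host_guest
begin

lemma depth_exists:
  assumes "L = 2 * \<lceil>ln (real s) / ln (real D - 1)\<rceil> + 3"
  shows "\<exists>m. s \<le> branching ^ m \<and> branching ^ m \<le> branching * s \<and> 2 * int m + 3 \<le> L"
proof -
  define c where "c = \<lceil>ln (real s) / ln (real branching)\<rceil>"
  have D: "real D - 1 = real branching" using D_ge_3 by (simp add: branching_def of_nat_diff)
  have "0 \<le> ln (real s) / ln (real branching)" using s_pos branching_ge_2 by simp
  then have c: "0 \<le> c" unfolding c_def by linarith
  obtain m where "m \<le> nat c" "s \<le> branching ^ m" "branching ^ m \<le> branching * s"
    using power_between[OF branching_ge_2 s_pos le_power_ceiling_log[OF branching_ge_2 s_pos]]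
    unfolding c_def by blast
  moreover have "int m \<le> c" using \<open>m \<le> nat c\<close> c by linarith
  ultimately show ?thesis using assms unfolding D c_def by (intro exI[of _ m]) simp
qed
end

theorem theorem2p12:
  fixes V :: "'v set" and G :: "nat \<Rightarrow> 'v \<Rightarrow> 'v \<Rightarrow> bool"
    and s t D n :: nat and L :: int
    and VH VH0 :: "'h set" and EH EH0 :: "'h set set" and col :: "'h set \<Rightarrow> nat"
    and R0 :: "'h set" and \<phi> :: "'h \<Rightarrow> 'v"
  assumes "s \<ge> 1" and "t \<ge> 1" and "D \<ge> 3"
    and "L = 2 * \<lceil>ln (real s) / ln (real D - 1)\<rceil> + 3"
    and "graph_family V t G" and "card V = n" and "s_joined V t G s"
    and "colgraph t VH EH col" and "max_mon_deg_le t VH EH col D"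
    and "int (card VH) \<le> int n - 6 * int s * int D"
    and "colgraph t VH0 EH0 col" and "colsubgraph VH0 EH0 VH EH" and "rooted VH0 EH0 R0"
    and "\<exists>Ps. path_constructible VH0 EH0 VH EH Ps \<and>
            (\<forall>p \<in> set Ps. int (length p) - 1 \<ge> L)"
    and "embedding V G VH0 EH0 col \<phi>"
    and "good V t G (2 * s) D VH0 EH0 col R0 \<phi>"
  shows "\<exists>R \<phi>'. R0 \<subseteq> R \<and> rooted VH EH R \<and> embedding V G VH EH col \<phi>' \<and>
           (\<forall>x \<in> VH0. \<phi>' x = \<phi> x) \<and> good V t G (2 * s) D VH EH col R \<phi>'"
proof -
  interpret host_guest V t G s D n VH EH col
    by unfold_locales (fact assms)+
  obtain m where m: "s \<le> branching ^ m" "branching ^ m \<le> branching * s" "2 * int m + 3 \<le> L"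
    using depth_exists[OF assms(4)] by blast
  obtain Ps where Ps: "path_constructible VH0 EH0 VH EH Ps" "\<forall>p\<in>set Ps. length p \<ge> 2 * m + 4"
    using assms(14) m(3) by fastforce
  obtain \<psi> where \<psi>: "partial_embedding VH EH \<psi>" "\<forall>x\<in>VH0. \<psi> x = \<phi> x"
    using extend_path_constructible[OF partial_embedding_init[OF assms(11,12,15,16)] Ps m(1,2)] by blast
  have "R0 \<subseteq> VH" using assms(12,13) unfolding rooted_def colsubgraph_def by blast
  then show ?thesis using partial_embedding_complete[OF \<psi>(1)] \<psi>(2) by blast
qed

end
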